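(* Let $\iota:\mathcal{F}\to\mathcal{F}_{quad}$ be the precomposition functor $\iota(F)=F\circ\epsilon$, where $\epsilon:\mathcal{T}_q\to\mathcal{E}^f$ is the forgetful functor described in the context. Then: (1) $\iota$ is exact; (2) $\iota$ preserves tensor products (pointwise tensor products over $\mathbb{F}_2$); (3) $\iota$ is fully faithful; (4) if $S$ is a simple object of $\mathcal{F}$, then $\iota(S)$ is a simple object of $\mathcal{F}_{quad}$.
   Context: All vector spaces are over $\mathbb{F}_2$. $\mathcal{E}$ is the category of all $\mathbb{F}_2$-vector spaces, $\mathcal{E}^f$ its full subcategory of finite-dimensional spaces, and $\mathcal{F}=\mathrm{Func}(\mathcal{E}^f,\mathcal{E})$. A quadratic form on a finite-dimensional $V$ is a map $q:V\to\mathbb{F}_2$ such that $B(x,y)=q(x+y)+q(x)+q(y)$ is bilinear; $(V,q)$ is non-degenerate if $\{v: B(v,w)=0\ \forall w\}=0$. $\mathcal{E}_q$ is the category whose objects are finite-dimensional non-degenerate quadratic spaces and whose morphisms are linear maps preserving the quadratic forms (these are injective). For $f:V\to W$ in $\mathcal{E}_q$, $W=f(V)\perp V'$ with $V'$ the orthogonal complement of $f(V)$. Pseudo push-out: given $f:V\to W=f(V)\perp V'$ and $g:V\to X=g(V)\perp V''$ in $\mathcal{E}_q$, set $W\perp_V X=V\perp V'\perp V''$, with the maps $W\to V\perp V'\perp V''$, $f(v)+v'\mapsto v+v'$, and $X\to V\perp V'\perp V''$, $g(v)+v''\mapsto v+v''$. The category $\mathcal{T}_q$: objects are those of $\mathcal{E}_q$;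 a morphism $V\to W$ is represented by a diagram $V\xrightarrow{f}X\xleftarrow{g}W$ in $\mathcal{E}_q$, written $[V\xrightarrow{f}X\xleftarrow{g}W]$; two such diagrams $[V\to X_1\leftarrow W]$, $[V\to X_2\leftarrow W]$ are identified under the equivalence relation generated by: there exists a morphism $\alpha:X_1\to X_2$ in $\mathcal{E}_q$ making both triangles commute. Composition of $[V\to X_1\leftarrow W]$ followed by $[W\to X_2\leftarrow Y]$ is $[V\to X_1\perp_W X_2\leftarrow Y]$ using the pseudo push-out of $X_1\leftarrow W\to X_2$. Then $\mathcal{F}_{quad}=\mathrm{Func}(\mathcal{T}_q,\mathcal{E})$. The functor $\epsilon:\mathcal{T}_q\to\mathcal{E}^f$ sends $V$ to its underlying vector space and $[V\xrightarrow{f}X\xleftarrow{g}W]$ to $p_g\circ f$, where, writing $X=g(W)\perp W'$, $p_g:X\to W$ is the orthogonal projection onto $g(W)$ followed by $g^{-1}$ (this is well defined and functorial). *)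

theory Defs
  imports Main "HOL-Library.Z2" "HOL-Library.Function_Algebras"
begin

text \<open>An F2-vector space is a subgroup of exponent 2 of an ambient abelian group
 (scalar multiplication by 0 and 1 is then determined); linear maps are additive maps.\<close>

definition F2sp :: "'v::ab_group_add set \<Rightarrow> bool" where
  "F2sp A \<longleftrightarrow> 0 \<in> A \<and> (\<forall>x\<in>A. \<forall>y\<in>A. x + y \<in> A) \<and> (\<forall>x\<in>A. x + x = 0)"

definition F2lin :: "'v::ab_group_add set \<Rightarrow> 'w::ab_group_add set \<Rightarrow> ('v \<Rightarrow> 'w) \<Rightarrow> bool" where
  "F2lin A B h \<longleftrightarrow> (\<forall>x\<in>A. h x \<in> B) \<and> (\<forall>x\<in>A. \<forall>y\<in>A. h (x + y) = h x + h y)"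

definition short_exact ::
  "'a::ab_group_add set \<Rightarrow> 'b::ab_group_add set \<Rightarrow> 'c::ab_group_add set \<Rightarrow> ('a \<Rightarrow> 'b) \<Rightarrow> ('b \<Rightarrow> 'c) \<Rightarrow> bool" where
  "short_exact A B C f g \<longleftrightarrow> F2lin A B f \<and> F2lin B C g \<and> inj_on f A
      \<and> f ` A = {y \<in> B. g y = 0} \<and> g ` B = C"

section \<open>The category E^f (skeleton: objects n = F2^n)\<close>

type_synonym vec = "nat \<Rightarrow> bit"

definition fvec :: "nat \<Rightarrow> vec set" where
  "fvec n = {x. \<forall>i\<ge>n. x i = 0}"

definition Ef_map :: "nat \<Rightarrow> nat \<Rightarrow> (vec \<Rightarrow> vec) \<Rightarrow> bool" where
  "Ef_map n m f \<longleftrightarrow> (\<forall>x\<in>fvec n. f x \<in> fvec m)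
      \<and> (\<forall>x\<in>fvec n. \<forall>y\<in>fvec n. f (x + y) = f x + f y)
      \<and> (\<forall>x. x \<notin> fvec n \<longrightarrow> f x = 0)"

definition fid :: "nat \<Rightarrow> vec \<Rightarrow> vec" where
  "fid n = (\<lambda>x. if x \<in> fvec n then x else 0)"

type_synonym ef_mor = "nat \<times> nat \<times> (vec \<Rightarrow> vec)"

definition is_Ffunctor :: "(nat \<Rightarrow> 'v::ab_group_add set) \<Rightarrow> (ef_mor \<Rightarrow> 'v \<Rightarrow> 'v) \<Rightarrow> bool" where
  "is_Ffunctor Fo Fm \<longleftrightarrow> (\<forall>n. F2sp (Fo n))
     \<and> (\<forall>n m f. Ef_map n m f \<longrightarrow> F2lin (Fo n) (Fo m) (Fm (n, m, f)))
     \<and> (\<forall>n. \<forall>x\<in>Fo n. Fm (n, n, fid n) x = x)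
     \<and> (\<forall>n m k f g. Ef_map n m f \<longrightarrow> Ef_map m k g \<longrightarrow>
          (\<forall>x\<in>Fo n. Fm (n, k, g \<circ> f) x = Fm (m, k, g) (Fm (n, m, f) x)))"

definition Ef_nat ::
  "(nat \<Rightarrow> 'v::ab_group_add set) \<Rightarrow> (ef_mor \<Rightarrow> 'v \<Rightarrow> 'v) \<Rightarrow>
   (nat \<Rightarrow> 'w::ab_group_add set) \<Rightarrow> (ef_mor \<Rightarrow> 'w \<Rightarrow> 'w) \<Rightarrow> (nat \<Rightarrow> 'v \<Rightarrow> 'w) \<Rightarrow> bool" where
  "Ef_nat Fo Fm Go Gm \<eta> \<longleftrightarrow> (\<forall>n. F2lin (Fo n) (Go n) (\<eta> n))
     \<and> (\<forall>n m f. Ef_map n m f \<longrightarrow> (\<forall>x\<in>Fo n. \<eta> m (Fm (n, m, f) x) = Gm (n, m, f) (\<eta> n x)))"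

definition Ef_subfunctor :: "(nat \<Rightarrow> 'v::ab_group_add set) \<Rightarrow> (ef_mor \<Rightarrow> 'v \<Rightarrow> 'v) \<Rightarrow> (nat \<Rightarrow> 'v set) \<Rightarrow> bool" where
  "Ef_subfunctor Fo Fm H \<longleftrightarrow> (\<forall>n. F2sp (H n) \<and> H n \<subseteq> Fo n)
     \<and> (\<forall>n m f. Ef_map n m f \<longrightarrow> Fm (n, m, f) ` H n \<subseteq> H m)"

definition Ef_simple :: "(nat \<Rightarrow> 'v::ab_group_add set) \<Rightarrow> (ef_mor \<Rightarrow> 'v \<Rightarrow> 'v) \<Rightarrow> bool" where
  "Ef_simple Fo Fm \<longleftrightarrow> is_Ffunctor Fo Fm \<and> (\<exists>n. Fo n \<noteq> {0})
     \<and> (\<forall>H. Ef_subfunctor Fo Fm H \<longrightarrow> (\<forall>n. H n = {0}) \<or> (\<forall>n. H n = Fo n))"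

section \<open>Quadratic spaces and the category T_q\<close>

type_synonym qobj = "nat \<times> (vec \<Rightarrow> bit)"

definition bil :: "(vec \<Rightarrow> bit) \<Rightarrow> vec \<Rightarrow> vec \<Rightarrow> bit" where
  "bil q x y = q (x + y) + q x + q y"

definition is_quad :: "nat \<Rightarrow> (vec \<Rightarrow> bit) \<Rightarrow> bool" where
  "is_quad n q \<longleftrightarrow> (\<forall>x\<in>fvec n. \<forall>y\<in>fvec n. \<forall>z\<in>fvec n.
      bil q (x + y) z = bil q x z + bil q y z \<and> bil q x (y + z) = bil q x y + bil q x z)"

definition nondeg :: "nat \<Rightarrow> (vec \<Rightarrow> bit) \<Rightarrow> bool" where
  "nondeg n q \<longleftrightarrow> (\<forall>v\<in>fvec n. (\<forall>w\<in>fvec n. bil q v w = 0) \<longrightarrow> v = 0)"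

definition Tq_obj :: "qobj set" where
  "Tq_obj = {(n, q). is_quad n q \<and> nondeg n q \<and> (\<forall>x. x \<notin> fvec n \<longrightarrow> q x = 0)}"

definition Eq_map :: "qobj \<Rightarrow> qobj \<Rightarrow> (vec \<Rightarrow> vec) \<Rightarrow> bool" where
  "Eq_map V X f \<longleftrightarrow> Ef_map (fst V) (fst X) f \<and> (\<forall>x\<in>fvec (fst V). snd X (f x) = snd V x)"

type_synonym cospan = "qobj \<times> (vec \<Rightarrow> vec) \<times> (vec \<Rightarrow> vec)"

definition cospans :: "qobj \<Rightarrow> qobj \<Rightarrow> cospan set" where
  "cospans V W = {(X, f, g). X \<in> Tq_obj \<and> Eq_map V X f \<and> Eq_map W X g}"

definition cosp_rel :: "qobj \<Rightarrow> qobj \<Rightarrow> (cospan \<times> cospan) set" where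
  "cosp_rel V W = {((X1, f1, g1), (X2, f2, g2)).
      (X1, f1, g1) \<in> cospans V W \<and> (X2, f2, g2) \<in> cospans V W \<and>
      (\<exists>\<alpha>. Eq_map X1 X2 \<alpha> \<and> \<alpha> \<circ> f1 = f2 \<and> \<alpha> \<circ> g1 = g2)}"

definition cosp_eq :: "qobj \<Rightarrow> qobj \<Rightarrow> (cospan \<times> cospan) set" where
  "cosp_eq V W = Restr ((cosp_rel V W \<union> (cosp_rel V W)\<inverse>)\<^sup>*) (cospans V W)"

definition Tq_hom :: "qobj \<Rightarrow> qobj \<Rightarrow> cospan set set" where
  "Tq_hom V W = cospans V W // cosp_eq V W"

definition cls :: "qobj \<Rightarrow> qobj \<Rightarrow> cospan \<Rightarrow> cospan set" where
  "cls V W r = cosp_eq V W `` {r}"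

type_synonym qmor = "qobj \<times> qobj \<times> cospan set"

definition Tq_id :: "qobj \<Rightarrow> qmor" where
  "Tq_id V = (V, V, cls V V (V, fid (fst V), fid (fst V)))"

definition orth :: "qobj \<Rightarrow> (vec \<Rightarrow> vec) \<Rightarrow> qobj \<Rightarrow> vec set" where
  "orth X g W = {x \<in> fvec (fst X). \<forall>w\<in>fvec (fst W). bil (snd X) x (g w) = 0}"

text \<open>(Z, a, b) realises the pseudo push-out of X1 <-g1- W -f2-> X2, i.e.
  Z = W \<perp> W' \<perp> W'' with W' = g1(W)^\<perp> in X1 and W'' = f2(W)^\<perp> in X2.\<close>
definition ppo :: "qobj \<Rightarrow> qobj \<Rightarrow> (vec \<Rightarrow> vec) \<Rightarrow> qobj \<Rightarrow> (vec \<Rightarrow> vec)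
                    \<Rightarrow> qobj \<Rightarrow> (vec \<Rightarrow> vec) \<Rightarrow> (vec \<Rightarrow> vec) \<Rightarrow> bool" where
  "ppo W X1 g1 X2 f2 Z a b \<longleftrightarrow> Z \<in> Tq_obj \<and> Eq_map X1 Z a \<and> Eq_map X2 Z b \<and> a \<circ> g1 = b \<circ> f2
     \<and> (\<forall>z\<in>fvec (fst Z). \<exists>x1\<in>fvec (fst X1). \<exists>x2\<in>fvec (fst X2). z = a x1 + b x2)
     \<and> (\<forall>x1\<in>orth X1 g1 W. \<forall>x2\<in>orth X2 f2 W. bil (snd Z) (a x1) (b x2) = 0)"

definition comp_cls :: "qobj \<Rightarrow> qobj \<Rightarrow> qobj \<Rightarrow> cospan set \<Rightarrow> cospan set \<Rightarrow> cospan set" where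
  "comp_cls V W Y c1 c2 =
     (case (SOME r. r \<in> c1) of (X1, f1, g1) \<Rightarrow>
      case (SOME r. r \<in> c2) of (X2, f2, g2) \<Rightarrow>
      case (SOME (Z, a, b). ppo W X1 g1 X2 f2 Z a b) of (Z, a, b) \<Rightarrow>
        cls V Y (Z, a \<circ> f1, b \<circ> g2))"

definition is_Fquad :: "(qobj \<Rightarrow> 'v::ab_group_add set) \<Rightarrow> (qmor \<Rightarrow> 'v \<Rightarrow> 'v) \<Rightarrow> bool" where
  "is_Fquad Go Gm \<longleftrightarrow> (\<forall>V\<in>Tq_obj. F2sp (Go V))
     \<and> (\<forall>V\<in>Tq_obj. \<forall>W\<in>Tq_obj. \<forall>c\<in>Tq_hom V W. F2lin (Go V) (Go W) (Gm (V, W, c)))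
     \<and> (\<forall>V\<in>Tq_obj. \<forall>x\<in>Go V. Gm (Tq_id V) x = x)
     \<and> (\<forall>V\<in>Tq_obj. \<forall>W\<in>Tq_obj. \<forall>Y\<in>Tq_obj. \<forall>c1\<in>Tq_hom V W. \<forall>c2\<in>Tq_hom W Y. \<forall>x\<in>Go V.
          Gm (V, Y, comp_cls V W Y c1 c2) x = Gm (W, Y, c2) (Gm (V, W, c1) x))"

definition Tq_nat ::
  "(qobj \<Rightarrow> 'v::ab_group_add set) \<Rightarrow> (qmor \<Rightarrow> 'v \<Rightarrow> 'v) \<Rightarrow>
   (qobj \<Rightarrow> 'w::ab_group_add set) \<Rightarrow> (qmor \<Rightarrow> 'w \<Rightarrow> 'w) \<Rightarrow> (qobj \<Rightarrow> 'v \<Rightarrow> 'w) \<Rightarrow> bool" where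
  "Tq_nat Go Gm Ho Hm \<theta> \<longleftrightarrow> (\<forall>V\<in>Tq_obj. F2lin (Go V) (Ho V) (\<theta> V))
     \<and> (\<forall>V\<in>Tq_obj. \<forall>W\<in>Tq_obj. \<forall>c\<in>Tq_hom V W. \<forall>x\<in>Go V.
          \<theta> W (Gm (V, W, c) x) = Hm (V, W, c) (\<theta> V x))"

definition Tq_subfunctor :: "(qobj \<Rightarrow> 'v::ab_group_add set) \<Rightarrow> (qmor \<Rightarrow> 'v \<Rightarrow> 'v) \<Rightarrow> (qobj \<Rightarrow> 'v set) \<Rightarrow> bool" where
  "Tq_subfunctor Go Gm H \<longleftrightarrow> (\<forall>V\<in>Tq_obj. F2sp (H V) \<and> H V \<subseteq> Go V)
     \<and> (\<forall>V\<in>Tq_obj. \<forall>W\<in>Tq_obj. \<forall>c\<in>Tq_hom V W. Gm (V, W, c) ` H V \<subseteq> H W)"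

definition Tq_simple :: "(qobj \<Rightarrow> 'v::ab_group_add set) \<Rightarrow> (qmor \<Rightarrow> 'v \<Rightarrow> 'v) \<Rightarrow> bool" where
  "Tq_simple Go Gm \<longleftrightarrow> is_Fquad Go Gm \<and> (\<exists>V\<in>Tq_obj. Go V \<noteq> {0})
     \<and> (\<forall>H. Tq_subfunctor Go Gm H \<longrightarrow> (\<forall>V\<in>Tq_obj. H V = {0}) \<or> (\<forall>V\<in>Tq_obj. H V = Go V))"

section \<open>The functor epsilon : T_q -> E^f and the precomposition functor iota\<close>

text \<open>For a cospan V -f-> X <-g- W: v |-> g^{-1}(orthogonal projection of f v onto g(W)).\<close>
definition eps_cosp :: "qobj \<Rightarrow> qobj \<Rightarrow> cospan \<Rightarrow> vec \<Rightarrow> vec" where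
  "eps_cosp V W r = (case r of (X, f, g) \<Rightarrow>
     (\<lambda>v. if v \<in> fvec (fst V) then
            (THE w. w \<in> fvec (fst W) \<and> (\<forall>w'\<in>fvec (fst W). bil (snd X) (f v + g w) (g w') = 0))
          else 0))"

definition eps_mor :: "qmor \<Rightarrow> ef_mor" where
  "eps_mor \<phi> = (case \<phi> of (V, W, c) \<Rightarrow> (fst V, fst W, eps_cosp V W (SOME r. r \<in> c)))"

definition iota_ob :: "(nat \<Rightarrow> 'v set) \<Rightarrow> qobj \<Rightarrow> 'v set" where
  "iota_ob Fo = (\<lambda>V. Fo (fst V))"

definition iota_mor :: "(ef_mor \<Rightarrow> 'v \<Rightarrow> 'v) \<Rightarrow> qmor \<Rightarrow> 'v \<Rightarrow> 'v" where
  "iota_mor Fm = (\<lambda>\<phi>. Fm (eps_mor \<phi>))"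

definition iota_nat :: "(nat \<Rightarrow> 'v \<Rightarrow> 'w) \<Rightarrow> qobj \<Rightarrow> 'v \<Rightarrow> 'w" where
  "iota_nat \<eta> = (\<lambda>V. \<eta> (fst V))"

section \<open>Pointwise tensor products\<close>

text \<open>Concrete model of A \<otimes> B: a \<otimes> b is realised as the function
  (phi, psi) |-> phi(a) psi(b) on pairs of linear functionals, and A \<otimes> B as the
  span of these elements.  f \<otimes> g acts by precomposition on the functionals.\<close>

definition tens_el :: "'v::ab_group_add set \<Rightarrow> 'w::ab_group_add set \<Rightarrow> 'v \<Rightarrow> 'w
                        \<Rightarrow> ('v \<Rightarrow> bit) \<times> ('w \<Rightarrow> bit) \<Rightarrow> bit" where
  "tens_el A B a b = (\<lambda>(\<phi>, \<psi>). if F2lin A UNIV \<phi> \<and> F2lin B UNIV \<psi> then \<phi> a * \<psi> b else 0)"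

definition tens_sp :: "'v::ab_group_add set \<Rightarrow> 'w::ab_group_add set
                        \<Rightarrow> (('v \<Rightarrow> bit) \<times> ('w \<Rightarrow> bit) \<Rightarrow> bit) set" where
  "tens_sp A B = \<Inter>{C. F2sp C \<and> {tens_el A B a b | a b. a \<in> A \<and> b \<in> B} \<subseteq> C}"

definition tens_map :: "'v::ab_group_add set \<Rightarrow> 'w::ab_group_add set \<Rightarrow> 'v set \<Rightarrow> 'w set
      \<Rightarrow> ('v \<Rightarrow> 'v) \<Rightarrow> ('w \<Rightarrow> 'w)
      \<Rightarrow> (('v \<Rightarrow> bit) \<times> ('w \<Rightarrow> bit) \<Rightarrow> bit) \<Rightarrow> (('v \<Rightarrow> bit) \<times> ('w \<Rightarrow> bit) \<Rightarrow> bit)" where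
  "tens_map A B A' B' f g t =
     (\<lambda>(\<phi>, \<psi>). if F2lin A' UNIV \<phi> \<and> F2lin B' UNIV \<psi> then t (\<phi> \<circ> f, \<psi> \<circ> g) else 0)"

definition ftens_ob :: "('i \<Rightarrow> 'v::ab_group_add set) \<Rightarrow> ('i \<Rightarrow> 'w::ab_group_add set)
                         \<Rightarrow> 'i \<Rightarrow> (('v \<Rightarrow> bit) \<times> ('w \<Rightarrow> bit) \<Rightarrow> bit) set" where
  "ftens_ob Fo Go = (\<lambda>x. tens_sp (Fo x) (Go x))"

definition ftens_mor :: "('i \<Rightarrow> 'v::ab_group_add set) \<Rightarrow> ('i \<Rightarrow> 'w::ab_group_add set)
     \<Rightarrow> ('i \<times> 'i \<times> 'd \<Rightarrow> 'v \<Rightarrow> 'v) \<Rightarrow> ('i \<times> 'i \<times> 'd \<Rightarrow> 'w \<Rightarrow> 'w)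
     \<Rightarrow> 'i \<times> 'i \<times> 'd \<Rightarrow> (('v \<Rightarrow> bit) \<times> ('w \<Rightarrow> bit) \<Rightarrow> bit) \<Rightarrow> (('v \<Rightarrow> bit) \<times> ('w \<Rightarrow> bit) \<Rightarrow> bit)" where
  "ftens_mor Fo Go Fm Gm = (\<lambda>\<mu>. case \<mu> of (x, y, d) \<Rightarrow>
       tens_map (Fo x) (Go x) (Fo y) (Go y) (Fm \<mu>) (Gm \<mu>))"

end

theory Submission
  imports Defs
begin

text \<open>The forgetful functor \<open>\<epsilon>\<close> is well defined on classes of cospans because an isometry
  between cospans preserves the orthogonality condition defining \<open>p\<^sub>g\<close>, and it is functorial
  because orthogonal projections compose through a pseudo push-out, which exists: it is
  \<open>X1 \<perp> f2(W)\<^sup>\<perp>\<close>.  Exactness and compatibility with tensor products are then pointwise.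
  Two facts give full faithfulness and simplicity.  First, \<open>\<epsilon>\<close> is full: a linear map
  \<open>h : V \<rightarrow> W\<close> is \<open>\<epsilon>\<close> of the cospan \<open>V \<rightarrow> W \<perp> V \<perp> W \<leftarrow> W\<close>, \<open>v \<mapsto> (h v, v, h v)\<close>.
  Second, every \<open>F2^n\<close> is a retract in \<open>E^f\<close> of the underlying space of an object of \<open>T_q\<close>,
  an orthogonal sum of \<open>n\<close> hyperbolic planes.  Hence a natural transformation or a subfunctor
  of \<open>\<iota> F\<close> is natural for all linear maps between such spaces, and it descends along the
  retractions to a natural transformation or subfunctor of \<open>F\<close>.\<close>

declare add_bit_eq_xor [simp del] mult_bit_eq_and [simp del]

lemma bit_eq_0_or_1: "(b::bit) = 0 \<or> b = 1"
  by (cases b) simp_all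

lemma vec_add_self [simp]: "(x::vec) + x = 0"
  by (rule ext) simp

lemma vec_two_mult [simp]: "2 * (x::vec) = 0"
  by (simp add: mult_2)

lemma bit_add_left_cancel [simp]: "(x::bit) + (x + y) = y"
  by (simp add: add.assoc[symmetric])

lemma vec_add_left_cancel [simp]: "(x::vec) + (x + y) = y"
  by (simp add: add.assoc[symmetric])

lemma bit_add_eq_iff: "(x::bit) + y = z \<longleftrightarrow> x = y + z"
  by (metis add.commute bit_add_left_cancel)

lemma vec_add_eq_iff: "(x::vec) + y = z \<longleftrightarrow> x = y + z"
  by (metis add.commute vec_add_left_cancel)

lemma fvec_0 [simp]: "0 \<in> fvec n"
  by (simp add: fvec_def)

lemma fvec_add [intro]: "x \<in> fvec n \<Longrightarrow> y \<in> fvec n \<Longrightarrow> x + y \<in> fvec n"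
  by (simp add: fvec_def)

lemma fvec_mono: "x \<in> fvec n \<Longrightarrow> n \<le> m \<Longrightarrow> x \<in> fvec m"
  by (simp add: fvec_def)

lemma fvec_zero: "fvec 0 = {0}"
  by (auto simp: fvec_def)

lemma finite_fvec: "finite (fvec n)"
proof -
  have "fvec n \<subseteq> (\<lambda>S i. if i \<in> S then 1 else 0) ` Pow {..<n}"
  proof
    fix x assume "x \<in> fvec n"
    then have "x = (\<lambda>i. if i \<in> {i. i < n \<and> x i = 1} then 1 else 0)"
      by (auto simp: fvec_def fun_eq_iff)
    then show "x \<in> (\<lambda>S i. if i \<in> S then 1 else 0) ` Pow {..<n}" by blast
  qed
  then show ?thesis by (rule finite_subset) simp
qed

section \<open>Quadratic forms over \<open>F2\<close>\<close>

lemma quad_add_eq: "q (x + y) = q x + q y + bil q x y"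
  by (simp add: bil_def algebra_simps)

lemma bil_commute: "bil q x y = bil q y x"
  by (simp add: bil_def algebra_simps)

lemma bil_add_left:
  "is_quad n q \<Longrightarrow> x \<in> fvec n \<Longrightarrow> y \<in> fvec n \<Longrightarrow> z \<in> fvec n \<Longrightarrow>
    bil q (x + y) z = bil q x z + bil q y z"
  by (simp add: is_quad_def)

lemma bil_add_right:
  "is_quad n q \<Longrightarrow> x \<in> fvec n \<Longrightarrow> y \<in> fvec n \<Longrightarrow> z \<in> fvec n \<Longrightarrow>
    bil q x (y + z) = bil q x y + bil q x z"
  by (simp add: is_quad_def)

lemma is_quadI:
  assumes "\<And>x y z. x \<in> fvec n \<Longrightarrow> y \<in> fvec n \<Longrightarrow> z \<in> fvec n \<Longrightarrow>
    bil q (x + y) z = bil q x z + bil q y z"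
  shows "is_quad n q"
  unfolding is_quad_def using assms bil_commute by metis

lemma bil_zero_left: "is_quad n q \<Longrightarrow> z \<in> fvec n \<Longrightarrow> bil q 0 z = 0"
  using bil_add_left[of n q 0 0 z] by simp

lemma bil_zero_right: "is_quad n q \<Longrightarrow> z \<in> fvec n \<Longrightarrow> bil q z 0 = 0"
  using bil_zero_left bil_commute by metis

lemma quad_zero: "is_quad n q \<Longrightarrow> q 0 = 0"
  using bil_zero_left[of n q 0] by (simp add: bil_def)

lemma Tq_objD:
  assumes "V \<in> Tq_obj"
  shows "is_quad (fst V) (snd V)" "nondeg (fst V) (snd V)" "\<And>x. x \<notin> fvec (fst V) \<Longrightarrow> snd V x = 0"
  using assms by (auto simp: Tq_obj_def)

lemma Tq_objI:
  "is_quad n q \<Longrightarrow> nondeg n q \<Longrightarrow> (\<And>x. x \<notin> fvec n \<Longrightarrow> q x = 0) \<Longrightarrow> (n, q) \<in> Tq_obj"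
  by (auto simp: Tq_obj_def)

lemma nondegD:
  "nondeg n q \<Longrightarrow> v \<in> fvec n \<Longrightarrow> (\<And>w. w \<in> fvec n \<Longrightarrow> bil q v w = 0) \<Longrightarrow> v = 0"
  by (simp add: nondeg_def)

lemma nondeg_eqI:
  assumes q: "is_quad n q" "nondeg n q" and xy: "x \<in> fvec n" "y \<in> fvec n"
    and eq: "\<And>w. w \<in> fvec n \<Longrightarrow> bil q x w = bil q y w"
  shows "x = y"
proof -
  have "x + y = 0"
  proof (rule nondegD[OF q(2) fvec_add[OF xy]])
    fix w assume "w \<in> fvec n"
    then show "bil q (x + y) w = 0" using bil_add_left[OF q(1) xy] eq by simp
  qed
  then show ?thesis by (simp add: vec_add_eq_iff)
qed

lemma Ef_map_in: "Ef_map n m f \<Longrightarrow> x \<in> fvec n \<Longrightarrow> f x \<in> fvec m"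
  by (simp add: Ef_map_def)

lemma Ef_map_add: "Ef_map n m f \<Longrightarrow> x \<in> fvec n \<Longrightarrow> y \<in> fvec n \<Longrightarrow> f (x + y) = f x + f y"
  by (simp add: Ef_map_def)

lemma Ef_map_out: "Ef_map n m f \<Longrightarrow> x \<notin> fvec n \<Longrightarrow> f x = 0"
  by (simp add: Ef_map_def)

lemma Ef_map_0 [simp]: "Ef_map n m f \<Longrightarrow> f 0 = 0"
  using Ef_map_add[of n m f 0 0] by simp

lemma Ef_map_comp:
  assumes "Ef_map n m f" "Ef_map m k g"
  shows "Ef_map n k (g \<circ> f)"
  using assms Ef_map_0[OF assms(2)] unfolding Ef_map_def by auto

lemma Ef_map_fid: "n \<le> m \<Longrightarrow> Ef_map n m (fid n)"
  by (auto simp: Ef_map_def fid_def fvec_mono)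

lemma fid_comp: "Ef_map n m f \<Longrightarrow> fid m \<circ> f = f"
  by (auto simp: fun_eq_iff fid_def Ef_map_def)

lemma comp_fid: "Ef_map n m f \<Longrightarrow> f \<circ> fid n = f"
  by (auto simp: fun_eq_iff fid_def Ef_map_def)

lemma Eq_map_Ef_map: "Eq_map V X f \<Longrightarrow> Ef_map (fst V) (fst X) f"
  by (simp add: Eq_map_def)

lemma Eq_map_in: "Eq_map V X f \<Longrightarrow> x \<in> fvec (fst V) \<Longrightarrow> f x \<in> fvec (fst X)"
  by (simp add: Eq_map_def Ef_map_def)

lemma Eq_map_quad: "Eq_map V X f \<Longrightarrow> x \<in> fvec (fst V) \<Longrightarrow> snd X (f x) = snd V x"
  by (simp add: Eq_map_def)

lemma Eq_map_comp: "Eq_map V X f \<Longrightarrow> Eq_map X Y g \<Longrightarrow> Eq_map V Y (g \<circ> f)"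
  unfolding Eq_map_def using Ef_map_comp Ef_map_in by fastforce

lemma Eq_map_fid: "Eq_map V V (fid (fst V))"
  using Ef_map_fid[of "fst V" "fst V"] by (simp add: Eq_map_def fid_def)

lemma Eq_map_bil:
  assumes f: "Eq_map V X f" and xy: "x \<in> fvec (fst V)" "y \<in> fvec (fst V)"
  shows "bil (snd X) (f x) (f y) = bil (snd V) x y"
proof -
  have "f (x + y) = f x + f y" using Ef_map_add[OF Eq_map_Ef_map[OF f] xy] .
  then show ?thesis unfolding bil_def using Eq_map_quad[OF f] xy fvec_add by metis
qed

section \<open>Riesz representation and orthogonal projection\<close>

definition unitv :: "nat \<Rightarrow> vec" where
  "unitv i = (\<lambda>j. if j = i then 1 else 0)"

definition lin_fun :: "nat \<Rightarrow> (vec \<Rightarrow> bit) \<Rightarrow> bool" where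
  "lin_fun m \<phi> \<longleftrightarrow> (\<forall>x\<in>fvec m. \<forall>y\<in>fvec m. \<phi> (x + y) = \<phi> x + \<phi> y)"

lemma unitv_fvec: "i < m \<Longrightarrow> unitv i \<in> fvec m"
  by (simp add: unitv_def fvec_def)

lemma lin_fun_0:
  assumes "lin_fun m \<phi>"
  shows "\<phi> 0 = 0"
proof -
  have "\<phi> (0 + 0) = \<phi> 0 + \<phi> 0" using assms fvec_0 unfolding lin_fun_def by blast
  then show ?thesis by simp
qed

lemma lin_fun_eqI:
  assumes \<phi>: "lin_fun m \<phi>" and \<psi>: "lin_fun m \<psi>" and unit: "\<And>i. i < m \<Longrightarrow> \<phi> (unitv i) = \<psi> (unitv i)"
    and x: "x \<in> fvec m"
  shows "\<phi> x = \<psi> x"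
proof -
  have "\<phi> x = \<psi> x" if "\<forall>i\<ge>k. x i = 0" "k \<le> m" for k x
    using that
  proof (induction k arbitrary: x)
    case 0
    then have "x = 0" by (simp add: fun_eq_iff)
    then show ?case using lin_fun_0[OF \<phi>] lin_fun_0[OF \<psi>] by (simp only:)
  next
    case (Suc k)
    define x' where "x' = x(k := 0)"
    have x': "\<forall>i\<ge>k. x' i = 0" "x' \<in> fvec m"
      using Suc.prems by (auto simp: x'_def fvec_def)
    have IH: "\<phi> x' = \<psi> x'" using Suc.IH x'(1) Suc.prems(2) by simp
    show ?case
    proof (cases "x k = 0")
      case True
      then show ?thesis using IH by (simp add: x'_def fun_upd_idem)
    next
      case False
      then have xx: "x = x' + unitv k" by (simp add: x'_def fun_eq_iff unitv_def)
      have u: "unitv k \<in> fvec m" using Suc.prems(2) by (simp add: unitv_fvec)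
      have "\<phi> x = \<phi> x' + \<phi> (unitv k)" "\<psi> x = \<psi> x' + \<psi> (unitv k)"
        using \<phi> \<psi> x'(2) u xx by (simp_all add: lin_fun_def)
      then show ?thesis using IH unit[of k] Suc.prems(2) by simp
    qed
  qed
  then show ?thesis using x by (simp add: fvec_def)
qed

definition lin_funs :: "nat \<Rightarrow> (vec \<Rightarrow> bit) set" where
  "lin_funs m = {\<psi>. lin_fun m \<psi> \<and> (\<forall>x. x \<notin> fvec m \<longrightarrow> \<psi> x = 0)}"

text \<open>Restriction to the \<open>m\<close> unit vectors is injective on linear functionals.\<close>
lemma card_lin_funs_le: "finite (lin_funs m) \<and> card (lin_funs m) \<le> card (fvec m)"
proof -
  define \<rho> where "\<rho> = (\<lambda>\<psi>::vec \<Rightarrow> bit. \<lambda>i. if i < m then \<psi> (unitv i) else 0)"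
  have inj: "inj_on \<rho> (lin_funs m)"
  proof (rule inj_onI)
    fix \<psi>1 \<psi>2 assume \<psi>: "\<psi>1 \<in> lin_funs m" "\<psi>2 \<in> lin_funs m" and eq: "\<rho> \<psi>1 = \<rho> \<psi>2"
    have "\<psi>1 x = \<psi>2 x" for x
    proof (cases "x \<in> fvec m")
      case True
      show ?thesis
      proof (rule lin_fun_eqI[OF _ _ _ True])
        fix i assume "i < m"
        then show "\<psi>1 (unitv i) = \<psi>2 (unitv i)" using fun_cong[OF eq, of i] by (simp add: \<rho>_def)
      qed (use \<psi> in \<open>auto simp: lin_funs_def\<close>)
    qed (use \<psi> in \<open>auto simp: lin_funs_def\<close>)
    then show "\<psi>1 = \<psi>2" by (rule ext)
  qed
  have into: "\<rho> ` lin_funs m \<subseteq> fvec m" by (auto simp: \<rho>_def fvec_def)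
  have "finite (lin_funs m)" using finite_imageD[OF finite_subset[OF into finite_fvec] inj] .
  moreover have "card (lin_funs m) \<le> card (fvec m)" using card_inj_on_le[OF inj into finite_fvec] .
  ultimately show ?thesis ..
qed

text \<open>Riesz representation: \<open>w \<mapsto> bil q w\<close> is injective for non-degenerate \<open>q\<close>, hence onto
  \<^term>\<open>lin_funs m\<close> by counting.\<close>
lemma nondeg_riesz:
  assumes q: "is_quad m q" "nondeg m q" and \<phi>: "lin_fun m \<phi>"
  shows "\<exists>w\<in>fvec m. \<forall>w'\<in>fvec m. bil q w w' = \<phi> w'"
proof -
  define L where "L = (\<lambda>w w'. if w' \<in> fvec m then bil q w w' else 0)"
  have L_into: "L ` fvec m \<subseteq> lin_funs m"
  proof
    fix \<psi> assume "\<psi> \<in> L ` fvec m"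
    then obtain w where w: "w \<in> fvec m" "\<psi> = L w" by blast
    have "lin_fun m (L w)" unfolding lin_fun_def L_def using bil_add_right[OF q(1) w(1)] fvec_add by simp
    then show "\<psi> \<in> lin_funs m" using w by (simp add: lin_funs_def L_def)
  qed
  have inj_L: "inj_on L (fvec m)"
  proof (rule inj_onI)
    fix w1 w2 assume w: "w1 \<in> fvec m" "w2 \<in> fvec m" and eq: "L w1 = L w2"
    show "w1 = w2"
    proof (rule nondeg_eqI[OF q w])
      fix w' assume "w' \<in> fvec m"
      then show "bil q w1 w' = bil q w2 w'" using fun_cong[OF eq, of w'] by (simp add: L_def)
    qed
  qed
  define \<psi> where "\<psi> = (\<lambda>w'. if w' \<in> fvec m then \<phi> w' else 0)"
  have "L ` fvec m = lin_funs m"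
  proof (rule card_seteq[OF _ L_into])
    show "finite (lin_funs m)" "card (lin_funs m) \<le> card (L ` fvec m)"
      using card_lin_funs_le card_image[OF inj_L] by simp_all
  qed
  moreover have "\<psi> \<in> lin_funs m"
    using \<phi> fvec_add by (simp add: \<psi>_def lin_funs_def lin_fun_def)
  ultimately have "\<psi> \<in> L ` fvec m" by simp
  then obtain w where Lw: "\<psi> = L w" and w: "w \<in> fvec m" by (rule imageE)
  show ?thesis
  proof (intro bexI[OF _ w] ballI)
    fix w' assume "w' \<in> fvec m"
    then show "bil q w w' = \<phi> w'" using fun_cong[OF Lw, of w'] by (simp add: L_def \<psi>_def)
  qed
qed

text \<open>In characteristic 2, \<open>x + g w \<perp> g(W)\<close> says that \<open>g w\<close> is the orthogonal
  projection of \<open>x\<close> onto \<open>g(W)\<close>; this is the predicate inside \<^const>\<open>eps_cosp\<close>.\<close>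
definition proj_coord :: "qobj \<Rightarrow> qobj \<Rightarrow> (vec \<Rightarrow> vec) \<Rightarrow> vec \<Rightarrow> vec \<Rightarrow> bool" where
  "proj_coord W X g x w \<longleftrightarrow>
     w \<in> fvec (fst W) \<and> (\<forall>w'\<in>fvec (fst W). bil (snd X) (x + g w) (g w') = 0)"

lemma proj_coord_in_orth:
  "proj_coord W X g x w \<Longrightarrow> x \<in> fvec (fst X) \<Longrightarrow> Ef_map (fst W) (fst X) g \<Longrightarrow> x + g w \<in> orth X g W"
  unfolding proj_coord_def orth_def using Ef_map_in fvec_add by blast

lemma proj_coord_ex1:
  assumes W: "W \<in> Tq_obj" and X: "is_quad (fst X) (snd X)" and g: "Eq_map W X g"
    and x: "x \<in> fvec (fst X)"
  shows "\<exists>!w. proj_coord W X g x w"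
proof -
  have Wq: "is_quad (fst W) (snd W)" "nondeg (fst W) (snd W)" using Tq_objD[OF W] by auto
  have gin: "\<And>w. w \<in> fvec (fst W) \<Longrightarrow> g w \<in> fvec (fst X)" using Eq_map_in[OF g] .
  have shift: "bil (snd X) (x + g w) (g w') = bil (snd X) x (g w') + bil (snd W) w w'"
    if "w \<in> fvec (fst W)" "w' \<in> fvec (fst W)" for w w'
    using bil_add_left[OF X x gin gin] Eq_map_bil[OF g] that by simp
  have "lin_fun (fst W) (\<lambda>w'. bil (snd X) x (g w'))"
    unfolding lin_fun_def
    using Ef_map_add[OF Eq_map_Ef_map[OF g]] bil_add_right[OF X x gin gin] by simp
  then obtain w where w: "w \<in> fvec (fst W)"
    and rep: "\<forall>w'\<in>fvec (fst W). bil (snd W) w w' = bil (snd X) x (g w')"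
    using nondeg_riesz[OF Wq] by blast
  show ?thesis
  proof (rule ex1I[of _ w])
    show "proj_coord W X g x w" using w rep shift by (simp add: proj_coord_def)
  next
    fix w2 assume "proj_coord W X g x w2"
    then have w2: "w2 \<in> fvec (fst W)" "\<forall>w'\<in>fvec (fst W). bil (snd X) (x + g w2) (g w') = 0"
      by (auto simp: proj_coord_def)
    show "w2 = w"
    proof (rule nondeg_eqI[OF Wq w2(1) w])
      fix w' assume w': "w' \<in> fvec (fst W)"
      then show "bil (snd W) w2 w' = bil (snd W) w w'"
        using w2 shift[OF w2(1) w'] rep by (simp add: bit_add_eq_iff)
    qed
  qed
qed

section \<open>Well-definedness of \<open>\<epsilon>\<close>\<close>

lemma cospansD:
  assumes "(X, f, g) \<in> cospans V W"
  shows "X \<in> Tq_obj" "Eq_map V X f" "Eq_map W X g"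
  using assms by (auto simp: cospans_def)

lemma eps_cosp_out: "v \<notin> fvec (fst V) \<Longrightarrow> eps_cosp V W (X, f, g) v = 0"
  by (simp add: eps_cosp_def)

lemma eps_cosp_eq_The:
  assumes W: "W \<in> Tq_obj" and r: "(X, f, g) \<in> cospans V W" and v: "v \<in> fvec (fst V)"
  shows "eps_cosp V W (X, f, g) v = (THE w. proj_coord W X g (f v) w)"
    and "\<exists>!w. proj_coord W X g (f v) w"
proof -
  show "eps_cosp V W (X, f, g) v = (THE w. proj_coord W X g (f v) w)"
    using v by (simp add: eps_cosp_def proj_coord_def)
  show "\<exists>!w. proj_coord W X g (f v) w"
    using proj_coord_ex1[OF W Tq_objD(1)[OF cospansD(1)[OF r]] cospansD(3)[OF r]]
      Eq_map_in[OF cospansD(2)[OF r] v] .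
qed

lemma eps_cosp_proj_coord:
  assumes "W \<in> Tq_obj" "(X, f, g) \<in> cospans V W" "v \<in> fvec (fst V)"
  shows "proj_coord W X g (f v) (eps_cosp V W (X, f, g) v)"
  unfolding eps_cosp_eq_The[OF assms] using eps_cosp_eq_The(2)[OF assms] by (rule theI')

lemma eps_cosp_eqI:
  assumes "W \<in> Tq_obj" "(X, f, g) \<in> cospans V W" "v \<in> fvec (fst V)"
    and "proj_coord W X g (f v) w"
  shows "eps_cosp V W (X, f, g) v = w"
  unfolding eps_cosp_eq_The[OF assms(1-3)]
  using eps_cosp_eq_The(2)[OF assms(1-3)] assms(4) the1_equality[where P="proj_coord W X g (f v)"]
  by blast

lemma eps_cosp_Ef_map:
  assumes W: "W \<in> Tq_obj" and r: "(X, f, g) \<in> cospans V W"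
  shows "Ef_map (fst V) (fst W) (eps_cosp V W (X, f, g))"
  unfolding Ef_map_def
proof (intro conjI ballI allI impI)
  fix v assume "v \<in> fvec (fst V)"
  then show "eps_cosp V W (X, f, g) v \<in> fvec (fst W)"
    using eps_cosp_proj_coord[OF W r] by (simp add: proj_coord_def)
next
  fix v assume "v \<notin> fvec (fst V)"
  then show "eps_cosp V W (X, f, g) v = 0" by (rule eps_cosp_out)
next
  fix v1 v2 assume v: "v1 \<in> fvec (fst V)" "v2 \<in> fvec (fst V)"
  have X: "is_quad (fst X) (snd X)" using Tq_objD(1)[OF cospansD(1)[OF r]] .
  have f: "Eq_map V X f" and g: "Eq_map W X g" using cospansD[OF r] by auto
  define w1 where "w1 = eps_cosp V W (X, f, g) v1"
  define w2 where "w2 = eps_cosp V W (X, f, g) v2"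
  have p: "proj_coord W X g (f v1) w1" "proj_coord W X g (f v2) w2"
    using eps_cosp_proj_coord[OF W r] v by (simp_all add: w1_def w2_def)
  then have w: "w1 \<in> fvec (fst W)" "w2 \<in> fvec (fst W)" by (auto simp: proj_coord_def)
  have "proj_coord W X g (f (v1 + v2)) (w1 + w2)"
    unfolding proj_coord_def
  proof (intro conjI ballI)
    fix w' assume w': "w' \<in> fvec (fst W)"
    have "f (v1 + v2) + g (w1 + w2) = (f v1 + g w1) + (f v2 + g w2)"
      using Ef_map_add[OF Eq_map_Ef_map[OF f] v] Ef_map_add[OF Eq_map_Ef_map[OF g] w]
      by (simp add: algebra_simps)
    moreover have "f v1 + g w1 \<in> fvec (fst X)" "f v2 + g w2 \<in> fvec (fst X)"
      using Eq_map_in[OF f] Eq_map_in[OF g] v w by auto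
    ultimately show "bil (snd X) (f (v1 + v2) + g (w1 + w2)) (g w') = 0"
      using bil_add_left[OF X _ _ Eq_map_in[OF g w']] p w' by (simp add: proj_coord_def)
  qed (use w in auto)
  then show "eps_cosp V W (X, f, g) (v1 + v2) = eps_cosp V W (X, f, g) v1 + eps_cosp V W (X, f, g) v2"
    using eps_cosp_eqI[OF W r fvec_add[OF v]] by (simp add: w1_def w2_def)
qed

lemma eps_cosp_cosp_rel:
  assumes W: "W \<in> Tq_obj" and rel: "((X1, f1, g1), (X2, f2, g2)) \<in> cosp_rel V W"
  shows "eps_cosp V W (X1, f1, g1) = eps_cosp V W (X2, f2, g2)"
proof
  fix v
  have r1: "(X1, f1, g1) \<in> cospans V W" and r2: "(X2, f2, g2) \<in> cospans V W"
    using rel by (auto simp: cosp_rel_def)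
  obtain \<alpha> where \<alpha>: "Eq_map X1 X2 \<alpha>" "\<alpha> \<circ> f1 = f2" "\<alpha> \<circ> g1 = g2"
    using rel by (auto simp: cosp_rel_def)
  show "eps_cosp V W (X1, f1, g1) v = eps_cosp V W (X2, f2, g2) v"
  proof (cases "v \<in> fvec (fst V)")
    case False
    then show ?thesis by (simp add: eps_cosp_out)
  next
    case v: True
    define w where "w = eps_cosp V W (X1, f1, g1) v"
    have p: "proj_coord W X1 g1 (f1 v) w" using eps_cosp_proj_coord[OF W r1 v] by (simp add: w_def)
    then have w: "w \<in> fvec (fst W)" by (simp add: proj_coord_def)
    have f1: "Eq_map V X1 f1" and g1: "Eq_map W X1 g1" using cospansD[OF r1] by auto
    have "proj_coord W X2 g2 (f2 v) w"
      unfolding proj_coord_def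
    proof (intro conjI ballI)
      fix w' assume w': "w' \<in> fvec (fst W)"
      have "\<alpha> (f1 v + g1 w) = f2 v + g2 w" "\<alpha> (g1 w') = g2 w'"
        using Ef_map_add[OF Eq_map_Ef_map[OF \<alpha>(1)] Eq_map_in[OF f1 v] Eq_map_in[OF g1 w]] \<alpha>(2,3)
        by (auto simp: fun_eq_iff)
      then show "bil (snd X2) (f2 v + g2 w) (g2 w') = 0"
        using Eq_map_bil[OF \<alpha>(1) fvec_add[OF Eq_map_in[OF f1 v] Eq_map_in[OF g1 w]] Eq_map_in[OF g1 w']]
          p w' by (simp add: proj_coord_def)
    qed (rule w)
    then show ?thesis using eps_cosp_eqI[OF W r2 v] by (simp add: w_def)
  qed
qed

lemma eps_cosp_cosp_eq:
  assumes W: "W \<in> Tq_obj" and e: "(r1, r2) \<in> cosp_eq V W"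
  shows "eps_cosp V W r1 = eps_cosp V W r2"
proof -
  have rel: "eps_cosp V W r = eps_cosp V W r'" if "(r, r') \<in> cosp_rel V W" for r r'
    using that eps_cosp_cosp_rel[OF W] by (cases r, cases r') blast
  have "(r1, r2) \<in> (cosp_rel V W \<union> (cosp_rel V W)\<inverse>)\<^sup>*" using e by (simp add: cosp_eq_def)
  then show ?thesis
    by (induction rule: rtrancl_induct) (auto dest: rel)
qed

lemma equiv_cosp_eq: "equiv (cospans V W) (cosp_eq V W)"
proof (rule equivI)
  show "refl_on (cospans V W) (cosp_eq V W)" by (rule refl_onI) (auto simp: cosp_eq_def)
  show "sym (cosp_eq V W)"
    unfolding cosp_eq_def
    by (intro sym_Int sym_rtrancl sym_Un_converse) (simp add: sym_def)
  show "trans (cosp_eq V W)" unfolding cosp_eq_def by (intro trans_Restr trans_rtrancl)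
  show "cosp_eq V W \<subseteq> cospans V W \<times> cospans V W" by (auto simp: cosp_eq_def)
qed

lemma cls_in_Tq_hom: "r \<in> cospans V W \<Longrightarrow> cls V W r \<in> Tq_hom V W"
  by (simp add: cls_def Tq_hom_def quotientI)

lemma cls_self: "r \<in> cospans V W \<Longrightarrow> r \<in> cls V W r"
  by (simp add: cls_def cosp_eq_def)

lemma some_in_Tq_hom: "c \<in> Tq_hom V W \<Longrightarrow> (SOME r. r \<in> c) \<in> c"
  unfolding Tq_hom_def using equiv_cosp_eq in_quotient_imp_non_empty by (metis ex_in_conv someI_ex)

lemma Tq_hom_cospans: "c \<in> Tq_hom V W \<Longrightarrow> r \<in> c \<Longrightarrow> r \<in> cospans V W"
  unfolding Tq_hom_def using equiv_cosp_eq in_quotient_imp_subset by blast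

lemma eps_mor_eq:
  assumes W: "W \<in> Tq_obj" and c: "c \<in> Tq_hom V W" and r: "r \<in> c"
  shows "eps_mor (V, W, c) = (fst V, fst W, eps_cosp V W r)"
proof -
  have "((SOME r. r \<in> c), r) \<in> cosp_eq V W"
    using c r some_in_Tq_hom[OF c] equiv_cosp_eq unfolding Tq_hom_def by (meson quotient_eq_iff)
  then show ?thesis using eps_cosp_cosp_eq[OF W] by (simp add: eps_mor_def)
qed

lemma eps_mor_Ef_map:
  assumes W: "W \<in> Tq_obj" and c: "c \<in> Tq_hom V W"
  obtains h where "eps_mor (V, W, c) = (fst V, fst W, h)" "Ef_map (fst V) (fst W) h"
proof -
  obtain X f g where r: "(X, f, g) \<in> c" using some_in_Tq_hom[OF c] by (metis prod_cases3)
  show ?thesis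
    using that eps_mor_eq[OF W c r] eps_cosp_Ef_map[OF W Tq_hom_cospans[OF c r]] by blast
qed

section \<open>Orthogonal sums and fullness of \<open>\<epsilon>\<close>\<close>

definition lo :: "nat \<Rightarrow> vec \<Rightarrow> vec" where
  "lo n z = (\<lambda>i. if i < n then z i else 0)"

definition hi :: "nat \<Rightarrow> vec \<Rightarrow> vec" where
  "hi n z = (\<lambda>i. z (i + n))"

definition shr :: "nat \<Rightarrow> vec \<Rightarrow> vec" where
  "shr n y = (\<lambda>i. if n \<le> i then y (i - n) else 0)"

lemma lo_add: "lo n (x + y) = lo n x + lo n y"
  by (simp add: lo_def fun_eq_iff)

lemma hi_add: "hi n (x + y) = hi n x + hi n y"
  by (simp add: hi_def fun_eq_iff)

lemma shr_add: "shr n (x + y) = shr n x + shr n y"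
  by (simp add: shr_def fun_eq_iff)

lemma shr_0 [simp]: "shr n 0 = 0"
  by (simp add: shr_def fun_eq_iff)

lemma lo_fvec: "lo n z \<in> fvec n"
  by (simp add: lo_def fvec_def)

lemma hi_fvec: "z \<in> fvec (n + m) \<Longrightarrow> hi n z \<in> fvec m"
  by (simp add: hi_def fvec_def)

lemma shr_fvec: "y \<in> fvec m \<Longrightarrow> shr n y \<in> fvec (n + m)"
  by (simp add: shr_def fvec_def)

lemma lo_add_shr_hi: "lo n z + shr n (hi n z) = z"
  by (simp add: lo_def hi_def shr_def fun_eq_iff)

lemma lo_id: "x \<in> fvec n \<Longrightarrow> lo n x = x"
  by (auto simp: lo_def fvec_def fun_eq_iff)

lemma hi_zero: "x \<in> fvec n \<Longrightarrow> hi n x = 0"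
  by (auto simp: hi_def fvec_def fun_eq_iff)

lemma lo_shr: "lo n (shr n y) = 0"
  by (simp add: lo_def shr_def fun_eq_iff)

lemma hi_shr: "hi n (shr n y) = y"
  by (simp add: hi_def shr_def fun_eq_iff)

text \<open>\<open>V \<perp> W\<close> lives on \<open>F2^(n+m)\<close>, \<open>V\<close> on the first \<open>n\<close> and \<open>W\<close> on the last \<open>m\<close> coordinates.\<close>
definition osum :: "qobj \<Rightarrow> qobj \<Rightarrow> qobj" where
  "osum V W = (fst V + fst W, \<lambda>z. if z \<in> fvec (fst V + fst W)
       then snd V (lo (fst V) z) + snd W (hi (fst V) z) else 0)"

lemma fst_osum [simp]: "fst (osum V W) = fst V + fst W"
  by (simp add: osum_def)

lemma osum_in_fvec: "x \<in> fvec (fst V) \<Longrightarrow> y \<in> fvec (fst W) \<Longrightarrow> x + shr (fst V) y \<in> fvec (fst (osum V W))"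
  using fvec_mono[of x "fst V" "fst V + fst W"] shr_fvec[of y "fst W" "fst V"] by auto

lemma osum_decomp:
  assumes "z \<in> fvec (fst (osum V W))"
  shows "\<exists>x\<in>fvec (fst V). \<exists>y\<in>fvec (fst W). z = x + shr (fst V) y"
proof (intro bexI)
  show "z = lo (fst V) z + shr (fst V) (hi (fst V) z)" by (simp add: lo_add_shr_hi)
  show "hi (fst V) z \<in> fvec (fst W)" using hi_fvec assms by simp
qed (rule lo_fvec)

lemma osum_quad:
  assumes "x \<in> fvec (fst V)" "y \<in> fvec (fst W)"
  shows "snd (osum V W) (x + shr (fst V) y) = snd V x + snd W y"
  using osum_in_fvec[OF assms] assms by (simp add: osum_def lo_add hi_add lo_id hi_zero lo_shr hi_shr)

lemma osum_bil:
  assumes "x \<in> fvec (fst V)" "y \<in> fvec (fst W)" "x' \<in> fvec (fst V)" "y' \<in> fvec (fst W)"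
  shows "bil (snd (osum V W)) (x + shr (fst V) y) (x' + shr (fst V) y')
       = bil (snd V) x x' + bil (snd W) y y'"
proof -
  have "x + shr (fst V) y + (x' + shr (fst V) y') = (x + x') + shr (fst V) (y + y')"
    by (simp add: shr_add algebra_simps)
  then show ?thesis
    unfolding bil_def using assms fvec_add[of x "fst V" x'] fvec_add[of y "fst W" y']
    by (simp only: osum_quad) (simp add: ac_simps)
qed

lemma osum_is_quad:
  assumes V: "is_quad (fst V) (snd V)" and W: "is_quad (fst W) (snd W)"
  shows "is_quad (fst (osum V W)) (snd (osum V W))"
proof (rule is_quadI)
  fix a b c
  assume abc: "a \<in> fvec (fst (osum V W))" "b \<in> fvec (fst (osum V W))" "c \<in> fvec (fst (osum V W))"
  obtain a1 a2 where A: "a1 \<in> fvec (fst V)" "a2 \<in> fvec (fst W)" "a = a1 + shr (fst V) a2"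
    using osum_decomp[OF abc(1)] by blast
  obtain b1 b2 where B: "b1 \<in> fvec (fst V)" "b2 \<in> fvec (fst W)" "b = b1 + shr (fst V) b2"
    using osum_decomp[OF abc(2)] by blast
  obtain c1 c2 where C: "c1 \<in> fvec (fst V)" "c2 \<in> fvec (fst W)" "c = c1 + shr (fst V) c2"
    using osum_decomp[OF abc(3)] by blast
  have ab: "a + b = (a1 + b1) + shr (fst V) (a2 + b2)" using A B by (simp add: shr_add algebra_simps)
  show "bil (snd (osum V W)) (a + b) c = bil (snd (osum V W)) a c + bil (snd (osum V W)) b c"
    unfolding ab unfolding A(3) B(3) C(3)
      osum_bil[OF fvec_add[OF A(1) B(1)] fvec_add[OF A(2) B(2)] C(1,2)]
      osum_bil[OF A(1,2) C(1,2)] osum_bil[OF B(1,2) C(1,2)]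
      bil_add_left[OF V A(1) B(1) C(1)] bil_add_left[OF W A(2) B(2) C(2)]
    by (simp add: ac_simps)
qed

lemma osum_nondeg:
  assumes V: "is_quad (fst V) (snd V)" "nondeg (fst V) (snd V)"
    and W: "is_quad (fst W) (snd W)" "nondeg (fst W) (snd W)"
  shows "nondeg (fst (osum V W)) (snd (osum V W))"
  unfolding nondeg_def
proof (intro ballI impI)
  fix v assume "v \<in> fvec (fst (osum V W))"
    and orth: "\<forall>w\<in>fvec (fst (osum V W)). bil (snd (osum V W)) v w = 0"
  then obtain v1 v2 where v: "v1 \<in> fvec (fst V)" "v2 \<in> fvec (fst W)" "v = v1 + shr (fst V) v2"
    using osum_decomp[of v V W] by blast
  have "v1 = 0"
  proof (rule nondegD[OF V(2) v(1)])
    fix w assume w: "w \<in> fvec (fst V)"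
    have "bil (snd (osum V W)) v (w + shr (fst V) 0) = 0" using orth osum_in_fvec[OF w fvec_0] by blast
    then show "bil (snd V) v1 w = 0" using osum_bil[OF v(1,2) w fvec_0] v(3) bil_zero_right[OF W(1) v(2)] by simp
  qed
  moreover have "v2 = 0"
  proof (rule nondegD[OF W(2) v(2)])
    fix w assume w: "w \<in> fvec (fst W)"
    have "bil (snd (osum V W)) v (0 + shr (fst V) w) = 0" using orth osum_in_fvec[OF fvec_0 w] by blast
    then show "bil (snd W) v2 w = 0" using osum_bil[OF v(1,2) fvec_0 w] v(3) bil_zero_right[OF V(1) v(1)] by simp
  qed
  ultimately show "v = 0" using v(3) by simp
qed

lemma osum_obj:
  assumes V: "V \<in> Tq_obj" and W: "W \<in> Tq_obj"
  shows "osum V W \<in> Tq_obj"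
proof -
  have "is_quad (fst (osum V W)) (snd (osum V W))" "nondeg (fst (osum V W)) (snd (osum V W))"
    using osum_is_quad osum_nondeg Tq_objD[OF V] Tq_objD[OF W] by blast+
  moreover have "\<And>x. x \<notin> fvec (fst (osum V W)) \<Longrightarrow> snd (osum V W) x = 0"
    by (simp add: osum_def)
  ultimately have "(fst (osum V W), snd (osum V W)) \<in> Tq_obj" by (rule Tq_objI)
  then show ?thesis by (simp only: prod.collapse)
qed

lemma Eq_map_osum_left:
  assumes "W \<in> Tq_obj"
  shows "Eq_map V (osum V W) (fid (fst V))"
  unfolding Eq_map_def
proof (intro conjI ballI)
  show "Ef_map (fst V) (fst (osum V W)) (fid (fst V))" by (simp add: Ef_map_fid)
  fix x assume x: "x \<in> fvec (fst V)"
  have "snd (osum V W) (x + shr (fst V) 0) = snd V x"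
    using osum_quad[OF x fvec_0] quad_zero[OF Tq_objD(1)[OF assms]] by simp
  then show "snd (osum V W) (fid (fst V) x) = snd V x" using x by (simp add: fid_def)
qed

text \<open>\<open>v \<mapsto> (h v, v, h v) \<in> W \<perp> (V \<perp> W)\<close>: the two copies of \<open>h v\<close> cancel in the quadratic
  form, so this is an isometric embedding of \<open>V\<close> whose projection onto the first summand is \<open>h\<close>.\<close>
definition graph_emb :: "qobj \<Rightarrow> qobj \<Rightarrow> (vec \<Rightarrow> vec) \<Rightarrow> vec \<Rightarrow> vec" where
  "graph_emb V W h v = (if v \<in> fvec (fst V) then h v + shr (fst W) (v + shr (fst V) (h v)) else 0)"

lemma graph_emb_in:
  assumes h: "Ef_map (fst V) (fst W) h" and v: "v \<in> fvec (fst V)"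
  shows "h v \<in> fvec (fst W)" "v + shr (fst V) (h v) \<in> fvec (fst (osum V W))"
  using Ef_map_in[OF h v] osum_in_fvec[OF v Ef_map_in[OF h v]] by auto

lemma Eq_map_graph_emb:
  assumes h: "Ef_map (fst V) (fst W) h"
  shows "Eq_map V (osum W (osum V W)) (graph_emb V W h)"
  unfolding Eq_map_def Ef_map_def
proof (intro conjI ballI allI impI)
  fix v assume v: "v \<in> fvec (fst V)"
  note in_sum = graph_emb_in[OF h v]
  show "graph_emb V W h v \<in> fvec (fst (osum W (osum V W)))"
    using osum_in_fvec[OF in_sum] v by (simp add: graph_emb_def)
  have "snd (osum W (osum V W)) (graph_emb V W h v) = snd W (h v) + (snd V v + snd W (h v))"
    using osum_quad[OF in_sum] osum_quad[OF v in_sum(1)] v by (simp add: graph_emb_def)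
  then show "snd (osum W (osum V W)) (graph_emb V W h v) = snd V v" by (simp add: ac_simps)
next
  fix v1 v2 assume v: "v1 \<in> fvec (fst V)" "v2 \<in> fvec (fst V)"
  have "h (v1 + v2) + shr (fst W) (v1 + v2 + shr (fst V) (h (v1 + v2)))
      = (h v1 + shr (fst W) (v1 + shr (fst V) (h v1))) + (h v2 + shr (fst W) (v2 + shr (fst V) (h v2)))"
    unfolding Ef_map_add[OF h v] shr_add by (simp only: ac_simps)
  then show "graph_emb V W h (v1 + v2) = graph_emb V W h v1 + graph_emb V W h v2"
    using v fvec_add[OF v] by (simp add: graph_emb_def)
qed (simp add: graph_emb_def)

lemma eps_cosp_graph_emb:
  assumes V: "V \<in> Tq_obj" and W: "W \<in> Tq_obj" and h: "Ef_map (fst V) (fst W) h"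
  shows "(osum W (osum V W), graph_emb V W h, fid (fst W)) \<in> cospans V W"
    and "eps_cosp V W (osum W (osum V W), graph_emb V W h, fid (fst W)) = h"
proof -
  have U: "osum V W \<in> Tq_obj" using osum_obj[OF V W] .
  show r: "(osum W (osum V W), graph_emb V W h, fid (fst W)) \<in> cospans V W"
    using osum_obj[OF W U] Eq_map_graph_emb[OF h] Eq_map_osum_left[OF U] by (simp add: cospans_def)
  have "eps_cosp V W (osum W (osum V W), graph_emb V W h, fid (fst W)) v = h v" for v
  proof (cases "v \<in> fvec (fst V)")
    case False
    then show ?thesis using eps_cosp_out Ef_map_out[OF h] by simp
  next
    case v: True
    note in_sum = graph_emb_in[OF h v]
    have "proj_coord W (osum W (osum V W)) (fid (fst W)) (graph_emb V W h v) (h v)"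
      unfolding proj_coord_def
    proof (intro conjI ballI)
      fix w' assume w': "w' \<in> fvec (fst W)"
      have "graph_emb V W h v + fid (fst W) (h v) = 0 + shr (fst W) (v + shr (fst V) (h v))"
        "fid (fst W) w' = w' + shr (fst W) 0"
        using v in_sum(1) w' by (simp_all add: graph_emb_def fid_def)
      then show "bil (snd (osum W (osum V W))) (graph_emb V W h v + fid (fst W) (h v)) (fid (fst W) w') = 0"
        using osum_bil[of 0 W "v + shr (fst V) (h v)" "osum V W" w' 0] in_sum(2) w'
          bil_zero_left[OF Tq_objD(1)[OF W] w'] bil_zero_right[OF Tq_objD(1)[OF U] in_sum(2)]
        by simp
    qed (rule in_sum(1))
    then show ?thesis using eps_cosp_eqI[OF W r v] by simp
  qed
  then show "eps_cosp V W (osum W (osum V W), graph_emb V W h, fid (fst W)) = h" ..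
qed

lemma eps_full:
  assumes V: "V \<in> Tq_obj" and W: "W \<in> Tq_obj" and h: "Ef_map (fst V) (fst W) h"
  shows "\<exists>c\<in>Tq_hom V W. eps_mor (V, W, c) = (fst V, fst W, h)"
proof
  note r = eps_cosp_graph_emb(1)[OF V W h]
  show "cls V W (osum W (osum V W), graph_emb V W h, fid (fst W)) \<in> Tq_hom V W"
    using cls_in_Tq_hom[OF r] .
  show "eps_mor (V, W, cls V W (osum W (osum V W), graph_emb V W h, fid (fst W))) = (fst V, fst W, h)"
    using eps_mor_eq[OF W cls_in_Tq_hom[OF r] cls_self[OF r]] eps_cosp_graph_emb(2)[OF V W h] by simp
qed

section \<open>Hyperbolic objects and retractions\<close>

definition hyp_plane :: "vec \<Rightarrow> bit" where
  "hyp_plane x = (if x \<in> fvec 2 then x 0 * x 1 else 0)"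

lemma fvec_2_eqI:
  assumes "x \<in> fvec 2" "y \<in> fvec 2" "x 0 = y 0" "x 1 = y 1"
  shows "x = y"
proof
  fix i
  show "x i = y i"
    using assms less_2_cases[of i] by (cases "i < 2") (auto simp: fvec_def)
qed

lemma bil_hyp_plane:
  "x \<in> fvec 2 \<Longrightarrow> y \<in> fvec 2 \<Longrightarrow> bil hyp_plane x y = x 0 * y 1 + y 0 * x 1"
  using bit_eq_0_or_1[of "x 0"] bit_eq_0_or_1[of "x 1"] bit_eq_0_or_1[of "y 0"] bit_eq_0_or_1[of "y 1"]
  by (auto simp: bil_def hyp_plane_def fvec_add)

lemma hyp_plane_obj: "(2, hyp_plane) \<in> Tq_obj"
proof (rule Tq_objI)
  show "is_quad 2 hyp_plane"
    by (rule is_quadI) (simp add: bil_hyp_plane fvec_add algebra_simps)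
  show "nondeg 2 hyp_plane"
    unfolding nondeg_def
  proof (intro ballI impI)
    fix v assume v: "v \<in> fvec 2" and orth: "\<forall>w\<in>fvec 2. bil hyp_plane v w = 0"
    have "unitv 0 \<in> fvec 2" "unitv 1 \<in> fvec 2" by (simp_all add: unitv_fvec)
    then have "v 1 = 0" "v 0 = 0" using orth v by (auto simp: bil_hyp_plane unitv_def)
    then show "v = 0" using fvec_2_eqI[OF v fvec_0] by simp
  qed
qed (simp add: hyp_plane_def)

primrec hyp :: "nat \<Rightarrow> qobj" where
  "hyp 0 = (0, \<lambda>x. 0)"
| "hyp (Suc k) = osum (hyp k) (2, hyp_plane)"

lemma hyp_obj: "hyp k \<in> Tq_obj"
proof (induction k)
  case 0
  show ?case by (simp, rule Tq_objI) (auto simp: is_quad_def nondeg_def fvec_zero bil_def)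
qed (simp add: osum_obj hyp_plane_obj)

abbreviation hdim :: "nat \<Rightarrow> nat" where
  "hdim n \<equiv> fst (hyp n)"

lemma le_hdim: "n \<le> hdim n"
  by (induction n) simp_all

definition prj :: "nat \<Rightarrow> nat \<Rightarrow> vec \<Rightarrow> vec" where
  "prj N n x = (if x \<in> fvec N then lo n x else 0)"

lemma Ef_map_prj: "Ef_map N n (prj N n)"
  by (auto simp: Ef_map_def prj_def lo_fvec lo_add fvec_add)

lemma prj_comp_fid: "n \<le> N \<Longrightarrow> prj N n \<circ> fid n = fid n"
  by (auto simp: fun_eq_iff prj_def fid_def lo_id fvec_mono)

section \<open>Existence of pseudo push-outs\<close>

definition lin_param :: "nat \<Rightarrow> nat \<Rightarrow> (vec \<Rightarrow> vec) \<Rightarrow> vec set \<Rightarrow> bool" where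
  "lin_param k N u S \<longleftrightarrow> Ef_map k N u \<and> inj_on u (fvec k) \<and> u ` fvec k = S"

lemma F2sp_vec_iff: "F2sp (S::vec set) \<longleftrightarrow> 0 \<in> S \<and> (\<forall>x\<in>S. \<forall>y\<in>S. x + y \<in> S)"
  by (simp add: F2sp_def)

definition param_ext :: "(vec \<Rightarrow> vec) \<Rightarrow> nat \<Rightarrow> vec \<Rightarrow> vec \<Rightarrow> vec" where
  "param_ext u0 k s x = (if x \<in> fvec (Suc k) then u0 (lo k x) + (\<lambda>i. x k * s i) else 0)"

lemma Ef_map_param_ext:
  assumes u0: "Ef_map k N u0" and s: "s \<in> fvec (Suc N)"
  shows "Ef_map (Suc k) (Suc N) (param_ext u0 k s)"
  unfolding Ef_map_def
proof (intro conjI ballI allI impI)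
  fix x assume "x \<in> fvec (Suc k)"
  moreover have "(\<lambda>i. x k * s i) \<in> fvec (Suc N)" using s by (auto simp: fvec_def)
  ultimately show "param_ext u0 k s x \<in> fvec (Suc N)"
    using fvec_mono[OF Ef_map_in[OF u0 lo_fvec]] by (auto simp: param_ext_def)
next
  fix x y assume xy: "x \<in> fvec (Suc k)" "y \<in> fvec (Suc k)"
  have "u0 (lo k (x + y)) = u0 (lo k x) + u0 (lo k y)"
    unfolding lo_add using Ef_map_add[OF u0 lo_fvec lo_fvec] .
  moreover have "(\<lambda>i. (x + y) k * s i) = (\<lambda>i. x k * s i) + (\<lambda>i. y k * s i)"
    by (simp add: fun_eq_iff distrib_right)
  ultimately show "param_ext u0 k s (x + y) = param_ext u0 k s x + param_ext u0 k s y"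
    using xy fvec_add[OF xy] by (simp add: param_ext_def ac_simps)
qed (simp add: param_ext_def)

lemma param_ext_last:
  assumes u0: "Ef_map k N u0" and s: "s N = 1" and x: "x \<in> fvec (Suc k)"
  shows "param_ext u0 k s x N = x k"
  using x s Ef_map_in[OF u0 lo_fvec, of x] by (simp add: param_ext_def fvec_def)

lemma inj_on_param_ext:
  assumes u0: "Ef_map k N u0" "inj_on u0 (fvec k)" and s: "s N = 1"
  shows "inj_on (param_ext u0 k s) (fvec (Suc k))"
proof (rule inj_onI)
  fix x y assume x: "x \<in> fvec (Suc k)" and y: "y \<in> fvec (Suc k)" and eq: "param_ext u0 k s x = param_ext u0 k s y"
  have k: "x k = y k"
    using param_ext_last[of k N u0 s x] param_ext_last[of k N u0 s y] u0(1) s x y eq by simp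
  then have "u0 (lo k x) = u0 (lo k y)" using eq x y by (simp add: param_ext_def)
  then have lo_eq: "lo k x = lo k y" using u0(2) lo_fvec by (meson inj_onD)
  show "x = y"
  proof
    fix i
    show "x i = y i"
      using fun_cong[OF lo_eq, of i] k x y by (cases "i < k"; cases "i = k") (auto simp: lo_def fvec_def)
  qed
qed

lemma lin_param_extend:
  assumes u0: "lin_param k N u0 {x \<in> S. x N = 0}"
    and S: "F2sp S" "S \<subseteq> fvec (Suc N)" and s: "s \<in> S" "s N = 1"
  shows "lin_param (Suc k) (Suc N) (param_ext u0 k s) S"
proof -
  have u0E: "Ef_map k N u0" and u0_inj: "inj_on u0 (fvec k)" and u0_img: "u0 ` fvec k = {x \<in> S. x N = 0}"
    using u0 by (auto simp: lin_param_def)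
  have "param_ext u0 k s ` fvec (Suc k) \<subseteq> S"
  proof
    fix z assume "z \<in> param_ext u0 k s ` fvec (Suc k)"
    then obtain x where x: "x \<in> fvec (Suc k)" "z = param_ext u0 k s x" by blast
    have "(\<lambda>i. x k * s i) = (if x k = 0 then 0 else s)"
      using bit_eq_0_or_1[of "x k"] by (auto simp: fun_eq_iff)
    moreover have "u0 (lo k x) \<in> S" using u0_img lo_fvec by blast
    ultimately show "z \<in> S" using x S(1) s(1) by (simp add: F2sp_def param_ext_def)
  qed
  moreover have "S \<subseteq> param_ext u0 k s ` fvec (Suc k)"
  proof
    fix z assume z: "z \<in> S"
    define t where "t = (if z N = 0 then z else z + s)"
    have "t \<in> S" "t N = 0" using z s S(1) by (auto simp: t_def F2sp_def)
    then have "t \<in> u0 ` fvec k" using u0_img by simp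
    then obtain y where y: "t = u0 y" "y \<in> fvec k" by (rule imageE)
    define x where "x = (if z N = 0 then y else y + unitv k)"
    have yk: "y k = 0" and lo_y: "lo k (y + unitv k) = y" "lo k y = y"
      using y(2) by (auto simp: lo_def unitv_def fun_eq_iff fvec_def)
    have x: "x \<in> fvec (Suc k)"
      using fvec_mono[OF y(2), of "Suc k"] unitv_fvec[of k "Suc k"] by (auto simp: x_def)
    have "param_ext u0 k s x = z"
      using x y(1)[symmetric] yk lo_y bit_eq_0_or_1[of "z N"] by (auto simp: param_ext_def x_def t_def unitv_def add.assoc)
    then show "z \<in> param_ext u0 k s ` fvec (Suc k)" using x by blast
  qed
  ultimately show ?thesis
    using Ef_map_param_ext[OF u0E] inj_on_param_ext[of k N u0 s] u0E u0_inj s S(2)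
    by (auto simp: lin_param_def)
qed

lemma subspace_lin_param:
  "F2sp S \<Longrightarrow> S \<subseteq> fvec N \<Longrightarrow> \<exists>k u. lin_param k N u S"
proof (induction N arbitrary: S)
  case 0
  then have "S = {0}" by (auto simp: fvec_zero F2sp_def)
  then have "lin_param 0 0 (fid 0) S"
    unfolding lin_param_def by (intro conjI Ef_map_fid) (simp_all add: fvec_zero fid_def)
  then show ?case by blast
next
  case (Suc N)
  define S0 where "S0 = {x \<in> S. x N = 0}"
  have "F2sp S0" using Suc.prems(1) by (auto simp: F2sp_def S0_def)
  moreover have "S0 \<subseteq> fvec N"
  proof
    fix x assume "x \<in> S0"
    then have "x \<in> fvec (Suc N)" "x N = 0" using Suc.prems(2) by (auto simp: S0_def)
    moreover have "i = N \<or> Suc N \<le> i" if "N \<le> i" for i using that by arith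
    ultimately show "x \<in> fvec N" by (auto simp: fvec_def)
  qed
  ultimately obtain k u0 where u0: "lin_param k N u0 S0" using Suc.IH by blast
  show ?case
  proof (cases "\<exists>s\<in>S. s N = 1")
    case True
    then show ?thesis using lin_param_extend[OF u0[unfolded S0_def] Suc.prems] by blast
  next
    case False
    then have "S0 = S" by (auto simp: S0_def)
    then have "lin_param k (Suc N) u0 S" using u0 by (auto simp: lin_param_def Ef_map_def fvec_mono)
    then show ?thesis by blast
  qed
qed

lemma F2sp_orth:
  assumes X: "is_quad (fst X) (snd X)" and g: "Eq_map W X g"
  shows "F2sp (orth X g W)"
  unfolding F2sp_vec_iff orth_def
  using bil_zero_left[OF X Eq_map_in[OF g]] bil_add_left[OF X _ _ Eq_map_in[OF g]] fvec_add by auto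

text \<open>The pseudo push-out of \<open>X1 \<leftarrow> W \<rightarrow> X2\<close> is built as \<open>X1 \<perp> S\<close>, where
  \<open>S = f2(W)\<^sup>\<perp>\<close> is coordinatised by \<open>u : F2^k \<rightarrow> S\<close>: since \<open>X2 = f2(W) \<perp> S\<close>, the map
  \<open>f2 w + s \<mapsto> g1 w + s\<close> embeds \<open>X2\<close> isometrically.\<close>
locale ppo_construction =
  fixes W X1 X2 :: qobj and g1 f2 :: "vec \<Rightarrow> vec" and k :: nat and u :: "vec \<Rightarrow> vec"
  assumes W: "W \<in> Tq_obj" and X1: "X1 \<in> Tq_obj" and X2: "X2 \<in> Tq_obj"
    and g1: "Eq_map W X1 g1" and f2: "Eq_map W X2 f2"
    and u: "lin_param k (fst X2) u (orth X2 f2 W)"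
begin

abbreviation "S \<equiv> orth X2 f2 W"

definition proj :: "vec \<Rightarrow> vec" where
  "proj = eps_cosp X2 W (X2, fid (fst X2), f2)"

definition coord :: "vec \<Rightarrow> vec" where
  "coord = the_inv_into (fvec k) u"

definition compl :: qobj where
  "compl = (k, \<lambda>y. if y \<in> fvec k then snd X2 (u y) else 0)"

definition Z :: qobj where
  "Z = osum X1 compl"

definition b :: "vec \<Rightarrow> vec" where
  "b x = (if x \<in> fvec (fst X2) then g1 (proj x) + shr (fst X1) (coord (x + f2 (proj x))) else 0)"

lemma X2_quad: "is_quad (fst X2) (snd X2)" "nondeg (fst X2) (snd X2)"
  using Tq_objD[OF X2] by auto

lemma S_fvec: "S \<subseteq> fvec (fst X2)"
  by (auto simp: orth_def)

lemma S_orth: "s \<in> S \<Longrightarrow> w \<in> fvec (fst W) \<Longrightarrow> bil (snd X2) s (f2 w) = 0"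
  by (simp add: orth_def)

lemma u_Ef_map: "Ef_map k (fst X2) u" and u_inj: "inj_on u (fvec k)" and u_img: "u ` fvec k = S"
  using u by (auto simp: lin_param_def)

lemma u_in_S: "y \<in> fvec k \<Longrightarrow> u y \<in> S"
  using u_img by blast

lemma proj_cospan: "(X2, fid (fst X2), f2) \<in> cospans X2 W"
  using X2 f2 Eq_map_fid by (simp add: cospans_def)

lemma proj_Ef_map: "Ef_map (fst X2) (fst W) proj"
  unfolding proj_def by (rule eps_cosp_Ef_map[OF W proj_cospan])

lemma proj_decomp:
  assumes x: "x \<in> fvec (fst X2)"
  shows "proj x \<in> fvec (fst W) \<and> x + f2 (proj x) \<in> S"
proof -
  have "proj_coord W X2 f2 x (proj x)"
    using eps_cosp_proj_coord[OF W proj_cospan x] x by (simp add: proj_def fid_def)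
  then show ?thesis
    using proj_coord_in_orth[OF _ x Eq_map_Ef_map[OF f2]] by (simp add: proj_coord_def)
qed

lemma proj_f2:
  assumes w: "w \<in> fvec (fst W)"
  shows "proj (f2 w) = w"
proof -
  have "proj_coord W X2 f2 (fid (fst X2) (f2 w)) w"
    using w Eq_map_in[OF f2 w] bil_zero_left[OF X2_quad(1) Eq_map_in[OF f2]]
    by (simp add: proj_coord_def fid_def)
  then show ?thesis unfolding proj_def by (rule eps_cosp_eqI[OF W proj_cospan Eq_map_in[OF f2 w]])
qed

lemma proj_S:
  assumes s: "s \<in> S"
  shows "proj s = 0"
proof -
  have "proj_coord W X2 f2 (fid (fst X2) s) 0"
    using s S_fvec S_orth Ef_map_0[OF Eq_map_Ef_map[OF f2]] by (auto simp: proj_coord_def fid_def)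
  then show ?thesis unfolding proj_def using s S_fvec by (intro eps_cosp_eqI[OF W proj_cospan]) auto
qed

lemma coord_inverse:
  assumes "s \<in> S"
  shows "coord s \<in> fvec k \<and> u (coord s) = s"
proof -
  have s: "s \<in> u ` fvec k" using u_img assms by simp
  show ?thesis
    using the_inv_into_into[OF u_inj s order_refl] f_the_inv_into_f[OF u_inj s] by (simp add: coord_def)
qed

lemma coord_u: "y \<in> fvec k \<Longrightarrow> coord (u y) = y"
  unfolding coord_def using u_inj by (rule the_inv_into_f_f)

lemma coord_add:
  assumes "s1 \<in> S" "s2 \<in> S"
  shows "coord (s1 + s2) = coord s1 + coord s2"
proof -
  have c: "coord s1 \<in> fvec k" "coord s2 \<in> fvec k" "u (coord s1) = s1" "u (coord s2) = s2"
    using coord_inverse assms by auto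
  then have "u (coord s1 + coord s2) = s1 + s2" using Ef_map_add[OF u_Ef_map c(1,2)] by simp
  then show ?thesis using coord_u[OF fvec_add[OF c(1,2)]] by simp
qed

lemma coord_0: "coord 0 = 0"
  using coord_u[OF fvec_0] Ef_map_0[OF u_Ef_map] by simp

lemma bil_compl: "y \<in> fvec k \<Longrightarrow> y' \<in> fvec k \<Longrightarrow> bil (snd compl) y y' = bil (snd X2) (u y) (u y')"
  using Ef_map_add[OF u_Ef_map] by (simp add: compl_def bil_def fvec_add)

lemma compl_obj: "compl \<in> Tq_obj"
proof -
  have uX: "u y \<in> fvec (fst X2)" if "y \<in> fvec k" for y using Ef_map_in[OF u_Ef_map that] .
  have "is_quad k (snd compl)"
    by (rule is_quadI) (simp add: bil_compl fvec_add Ef_map_add[OF u_Ef_map] bil_add_left[OF X2_quad(1) uX uX uX])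
  moreover have "nondeg k (snd compl)"
    unfolding nondeg_def
  proof (intro ballI impI)
    fix y assume y: "y \<in> fvec k" and orth: "\<forall>y'\<in>fvec k. bil (snd compl) y y' = 0"
    have "u y = 0"
    proof (rule nondegD[OF X2_quad(2) uX[OF y]])
      fix x assume x: "x \<in> fvec (fst X2)"
      have "x + f2 (proj x) \<in> u ` fvec k" using proj_decomp[OF x] u_img by simp
      then obtain y' where y': "y' \<in> fvec k" "u y' = x + f2 (proj x)" by (auto simp del: u_img)
      have p: "proj x \<in> fvec (fst W)" "x + f2 (proj x) \<in> fvec (fst X2)"
        using proj_decomp[OF x] S_fvec by auto
      have "bil (snd X2) (u y) (f2 (proj x) + (x + f2 (proj x)))
          = bil (snd X2) (u y) (f2 (proj x)) + bil (snd X2) (u y) (u y')"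
        using bil_add_right[OF X2_quad(1) uX[OF y] Eq_map_in[OF f2 p(1)] p(2)] y'(2) by simp
      also have "\<dots> = 0"
        using S_orth[OF u_in_S[OF y] p(1)] orth bil_compl[OF y y'(1)] y'(1) by simp
      finally show "bil (snd X2) (u y) x = 0" by (simp add: add.left_commute[of "f2 (proj x)"])
    qed
    then show "y = 0" using coord_u[OF y] coord_0 by simp
  qed
  ultimately show ?thesis unfolding compl_def by (intro Tq_objI) simp_all
qed

lemma Z_obj: "Z \<in> Tq_obj"
  unfolding Z_def by (rule osum_obj[OF X1 compl_obj])

lemma a_Eq_map: "Eq_map X1 Z (fid (fst X1))"
  unfolding Z_def by (rule Eq_map_osum_left[OF compl_obj])

lemma b_decomp:
  assumes x: "x \<in> fvec (fst X2)"
  shows "b x = g1 (proj x) + shr (fst X1) (coord (x + f2 (proj x)))"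
    and "proj x \<in> fvec (fst W)" "coord (x + f2 (proj x)) \<in> fvec (fst compl)"
  using x proj_decomp[OF x] coord_inverse by (auto simp: b_def compl_def)

lemma b_Eq_map: "Eq_map X2 Z b"
  unfolding Eq_map_def Ef_map_def
proof (intro conjI ballI allI impI)
  fix x assume x: "x \<in> fvec (fst X2)"
  show "b x \<in> fvec (fst Z)"
    unfolding b_decomp(1)[OF x] Z_def by (rule osum_in_fvec[OF Eq_map_in[OF g1 b_decomp(2)[OF x]] b_decomp(3)[OF x]])
  define t where "t = x + f2 (proj x)"
  have t: "t \<in> S" "u (coord t) = t" using proj_decomp[OF x] coord_inverse by (auto simp: t_def)
  have "snd X2 x = snd X2 (f2 (proj x)) + snd X2 t"
    using quad_add_eq[of "snd X2" "f2 (proj x)" t] S_orth[OF t(1) b_decomp(2)[OF x]]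
    by (simp add: t_def bil_commute add.assoc[symmetric])
  then show "snd Z (b x) = snd X2 x"
    using osum_quad[OF Eq_map_in[OF g1 b_decomp(2)[OF x]] b_decomp(3)[OF x]] b_decomp[OF x] t
      Eq_map_quad[OF g1] Eq_map_quad[OF f2]
    by (simp add: Z_def compl_def t_def)
next
  fix x y assume xy: "x \<in> fvec (fst X2)" "y \<in> fvec (fst X2)"
  have p: "proj (x + y) = proj x + proj y" using Ef_map_add[OF proj_Ef_map xy] .
  have "x + y + f2 (proj (x + y)) = (x + f2 (proj x)) + (y + f2 (proj y))"
    using p Ef_map_add[OF Eq_map_Ef_map[OF f2] b_decomp(2)[OF xy(1)] b_decomp(2)[OF xy(2)]]
    by (simp add: ac_simps)
  then have "coord (x + y + f2 (proj (x + y))) = coord (x + f2 (proj x)) + coord (y + f2 (proj y))"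
    using coord_add proj_decomp xy by presburger
  moreover have "g1 (proj (x + y)) = g1 (proj x) + g1 (proj y)"
    using p Ef_map_add[OF Eq_map_Ef_map[OF g1] b_decomp(2)[OF xy(1)] b_decomp(2)[OF xy(2)]] by simp
  ultimately show "b (x + y) = b x + b y"
    using b_decomp(1) xy fvec_add[OF xy] by (simp add: shr_add ac_simps)
qed (simp add: b_def)

lemma a_g1_eq_b_f2: "fid (fst X1) \<circ> g1 = b \<circ> f2"
proof
  fix w
  show "(fid (fst X1) \<circ> g1) w = (b \<circ> f2) w"
  proof (cases "w \<in> fvec (fst W)")
    case True
    then show ?thesis
      using b_decomp(1)[OF Eq_map_in[OF f2 True]] proj_f2[OF True] coord_0 Eq_map_in[OF g1 True]
      by (simp add: fid_def)
  next
    case False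
    then show ?thesis
      using Ef_map_out[OF Eq_map_Ef_map[OF g1]] Ef_map_out[OF Eq_map_Ef_map[OF f2]] b_decomp(1)[OF fvec_0]
        Ef_map_0[OF proj_Ef_map] Ef_map_0[OF Eq_map_Ef_map[OF g1]] Ef_map_0[OF Eq_map_Ef_map[OF f2]] coord_0
      by (simp add: fid_def)
  qed
qed

lemma b_S: "s \<in> S \<Longrightarrow> b s = shr (fst X1) (coord s)"
  using b_decomp(1) S_fvec proj_S Ef_map_0[OF Eq_map_Ef_map[OF g1]] Ef_map_0[OF Eq_map_Ef_map[OF f2]]
  by auto

lemma spanning: "\<forall>z\<in>fvec (fst Z). \<exists>x1\<in>fvec (fst X1). \<exists>x2\<in>fvec (fst X2). z = fid (fst X1) x1 + b x2"
proof
  fix z assume "z \<in> fvec (fst Z)"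
  then have "z \<in> fvec (fst (osum X1 compl))" by (simp add: Z_def)
  then obtain x1 y where x1: "x1 \<in> fvec (fst X1)" and y: "y \<in> fvec k" and z: "z = x1 + shr (fst X1) y"
    using osum_decomp[of z X1 compl] by (auto simp: compl_def)
  have "b (u y) = shr (fst X1) y" using b_S[OF u_in_S[OF y]] coord_u[OF y] by simp
  then have "z = fid (fst X1) x1 + b (u y)" using x1 z by (simp add: fid_def)
  then show "\<exists>x1\<in>fvec (fst X1). \<exists>x2\<in>fvec (fst X2). z = fid (fst X1) x1 + b x2"
    using x1 Ef_map_in[OF u_Ef_map y] by blast
qed

lemma orthogonal: "\<forall>x1\<in>orth X1 g1 W. \<forall>x2\<in>S. bil (snd Z) (fid (fst X1) x1) (b x2) = 0"
proof (intro ballI)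
  fix x1 x2 assume x1: "x1 \<in> orth X1 g1 W" and x2: "x2 \<in> S"
  have x1f: "x1 \<in> fvec (fst X1)" using x1 by (simp add: orth_def)
  have c: "coord x2 \<in> fvec (fst compl)" using coord_inverse[OF x2] by (simp add: compl_def)
  have "bil (snd Z) (x1 + shr (fst X1) 0) (0 + shr (fst X1) (coord x2)) = 0"
    using osum_bil[OF x1f fvec_0 fvec_0 c] bil_zero_right[OF Tq_objD(1)[OF X1] x1f]
      bil_zero_left[OF Tq_objD(1)[OF compl_obj] c]
    by (simp add: Z_def)
  then show "bil (snd Z) (fid (fst X1) x1) (b x2) = 0" using x1f b_S[OF x2] by (simp add: fid_def)
qed

lemma is_ppo: "ppo W X1 g1 X2 f2 Z (fid (fst X1)) b"
  unfolding ppo_def using Z_obj a_Eq_map b_Eq_map a_g1_eq_b_f2 spanning orthogonal by blast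

end

lemma ppo_exists:
  assumes "W \<in> Tq_obj" "X1 \<in> Tq_obj" "X2 \<in> Tq_obj" "Eq_map W X1 g1" "Eq_map W X2 f2"
  shows "\<exists>Z a b. ppo W X1 g1 X2 f2 Z a b"
proof -
  have "orth X2 f2 W \<subseteq> fvec (fst X2)" by (auto simp: orth_def)
  then obtain k u where "lin_param k (fst X2) u (orth X2 f2 W)"
    using subspace_lin_param[OF F2sp_orth[OF Tq_objD(1)[OF assms(3)] assms(5)]] by blast
  then interpret ppo_construction W X1 X2 g1 f2 k u
    using assms by unfold_locales
  show ?thesis using is_ppo by blast
qed

section \<open>Functoriality of \<open>\<epsilon>\<close>\<close>

lemma eps_mor_Tq_id:
  assumes V: "V \<in> Tq_obj"
  shows "eps_mor (Tq_id V) = (fst V, fst V, fid (fst V))"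
proof -
  define r where "r = (V, fid (fst V), fid (fst V))"
  have r: "r \<in> cospans V V" using V Eq_map_fid by (simp add: cospans_def r_def)
  have "eps_cosp V V r v = fid (fst V) v" for v
  proof (cases "v \<in> fvec (fst V)")
    case False
    then show ?thesis by (simp add: r_def eps_cosp_out fid_def)
  next
    case True
    have "proj_coord V V (fid (fst V)) (fid (fst V) v) v"
      using True bil_zero_left[OF Tq_objD(1)[OF V]] by (simp add: proj_coord_def fid_def)
    then show ?thesis using eps_cosp_eqI[OF V r[unfolded r_def] True] True by (simp add: r_def fid_def)
  qed
  then show ?thesis
    using eps_mor_eq[OF V cls_in_Tq_hom[OF r] cls_self[OF r]] by (simp add: Tq_id_def r_def fun_eq_iff)
qed

text \<open>Since \<open>X2 = f2(W) + f2(W)\<^sup>\<perp>\<close> and \<open>b \<circ> f2 = a \<circ> g1\<close>, the two defining properties of a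
  pseudo push-out make \<open>a\<close> map \<open>g1(W)\<^sup>\<perp>\<close> into the orthogonal complement of all of \<open>b(X2)\<close>.\<close>
lemma ppo_orth_image:
  assumes P: "ppo W X1 g1 X2 f2 Z a b" and W: "W \<in> Tq_obj" and X2: "X2 \<in> Tq_obj"
    and g1: "Eq_map W X1 g1" and f2: "Eq_map W X2 f2"
    and x1: "x1 \<in> orth X1 g1 W" and x2: "x2 \<in> fvec (fst X2)"
  shows "bil (snd Z) (a x1) (b x2) = 0"
proof -
  have Z: "Z \<in> Tq_obj" and a: "Eq_map X1 Z a" and b: "Eq_map X2 Z b" and ab: "a \<circ> g1 = b \<circ> f2"
    and orthP: "\<forall>x1\<in>orth X1 g1 W. \<forall>x2\<in>orth X2 f2 W. bil (snd Z) (a x1) (b x2) = 0"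
    using P by (auto simp: ppo_def)
  have x1f: "x1 \<in> fvec (fst X1)" using x1 by (simp add: orth_def)
  obtain w where w: "proj_coord W X2 f2 x2 w"
    using proj_coord_ex1[OF W Tq_objD(1)[OF X2] f2 x2] by blast
  then have wf: "w \<in> fvec (fst W)" by (simp add: proj_coord_def)
  define t where "t = x2 + f2 w"
  have t: "t \<in> orth X2 f2 W" using proj_coord_in_orth[OF w x2 Eq_map_Ef_map[OF f2]] by (simp add: t_def)
  then have tf: "t \<in> fvec (fst X2)" by (simp add: orth_def)
  have "b x2 = a (g1 w) + b t"
    using Ef_map_add[OF Eq_map_Ef_map[OF b] Eq_map_in[OF f2 wf] tf] fun_cong[OF ab, of w]
    by (simp add: t_def)
  then have "bil (snd Z) (a x1) (b x2) = bil (snd Z) (a x1) (a (g1 w)) + bil (snd Z) (a x1) (b t)"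
    using bil_add_right[OF Tq_objD(1)[OF Z] Eq_map_in[OF a x1f] Eq_map_in[OF a Eq_map_in[OF g1 wf]]
        Eq_map_in[OF b tf]] by simp
  also have "\<dots> = 0"
    using Eq_map_bil[OF a x1f Eq_map_in[OF g1 wf]] x1 wf orthP t by (simp add: orth_def)
  finally show ?thesis .
qed

lemma ppo_proj_coord_comp:
  assumes P: "ppo W X1 g1 X2 f2 Z a b" and W: "W \<in> Tq_obj" and X2: "X2 \<in> Tq_obj"
    and g1: "Eq_map W X1 g1" and f2: "Eq_map W X2 f2" and g2: "Eq_map Y X2 g2"
    and x: "x \<in> fvec (fst X1)"
    and pw: "proj_coord W X1 g1 x w" and py: "proj_coord Y X2 g2 (f2 w) y"
  shows "proj_coord Y Z (b \<circ> g2) (a x) y"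
proof -
  have Z: "Z \<in> Tq_obj" and a: "Eq_map X1 Z a" and b: "Eq_map X2 Z b" and ab: "a \<circ> g1 = b \<circ> f2"
    using P by (auto simp: ppo_def)
  have w: "w \<in> fvec (fst W)" and y: "y \<in> fvec (fst Y)"
    using pw py by (simp_all add: proj_coord_def)
  define x1 where "x1 = x + g1 w"
  define x2 where "x2 = f2 w + g2 y"
  have x1: "x1 \<in> orth X1 g1 W"
    using proj_coord_in_orth[OF pw x Eq_map_Ef_map[OF g1]] by (simp add: x1_def)
  then have x1f: "x1 \<in> fvec (fst X1)" by (simp add: orth_def)
  have x2f: "x2 \<in> fvec (fst X2)"
    using Eq_map_in[OF f2 w] Eq_map_in[OF g2 y] by (simp add: x2_def fvec_add)
  have "a x = a x1 + b (f2 w)"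
    using Ef_map_add[OF Eq_map_Ef_map[OF a] x1f Eq_map_in[OF g1 w]] fun_cong[OF ab, of w]
    by (simp add: x1_def add.assoc)
  then have decomp: "a x + b (g2 y) = a x1 + b x2"
    using Ef_map_add[OF Eq_map_Ef_map[OF b] Eq_map_in[OF f2 w] Eq_map_in[OF g2 y]]
    by (simp add: x2_def add.assoc)
  show ?thesis
    unfolding proj_coord_def
  proof (intro conjI ballI)
    fix y' assume y': "y' \<in> fvec (fst Y)"
    have g2y': "g2 y' \<in> fvec (fst X2)" using Eq_map_in[OF g2 y'] .
    have "bil (snd Z) (b x2) (b (g2 y')) = 0"
      using Eq_map_bil[OF b x2f g2y'] py y' by (simp add: proj_coord_def x2_def)
    moreover have "bil (snd Z) (a x1) (b (g2 y')) = 0"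
      using ppo_orth_image[OF P W X2 g1 f2 x1 g2y'] .
    ultimately show "bil (snd Z) (a x + (b \<circ> g2) y) ((b \<circ> g2) y') = 0"
      using decomp bil_add_left[OF Tq_objD(1)[OF Z] Eq_map_in[OF a x1f] Eq_map_in[OF b x2f] Eq_map_in[OF b g2y']]
      by simp
  qed (rule y)
qed

lemma eps_cosp_ppo:
  assumes W: "W \<in> Tq_obj" and Y: "Y \<in> Tq_obj"
    and r1: "(X1, f1, g1) \<in> cospans V W" and r2: "(X2, f2, g2) \<in> cospans W Y"
    and P: "ppo W X1 g1 X2 f2 Z a b"
  shows "(Z, a \<circ> f1, b \<circ> g2) \<in> cospans V Y"
    and "eps_cosp V Y (Z, a \<circ> f1, b \<circ> g2) = eps_cosp W Y (X2, f2, g2) \<circ> eps_cosp V W (X1, f1, g1)"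
proof -
  note cosp1 = cospansD[OF r1] and cosp2 = cospansD[OF r2]
  show r3: "(Z, a \<circ> f1, b \<circ> g2) \<in> cospans V Y"
    using P Eq_map_comp[OF cosp1(2)] Eq_map_comp[OF cosp2(3)] by (simp add: cospans_def ppo_def)
  have "eps_cosp V Y (Z, a \<circ> f1, b \<circ> g2) v = eps_cosp W Y (X2, f2, g2) (eps_cosp V W (X1, f1, g1) v)" for v
  proof (cases "v \<in> fvec (fst V)")
    case False
    then show ?thesis using eps_cosp_out Ef_map_0[OF eps_cosp_Ef_map[OF Y r2]] by simp
  next
    case v: True
    have pw: "proj_coord W X1 g1 (f1 v) (eps_cosp V W (X1, f1, g1) v)"
      using eps_cosp_proj_coord[OF W r1 v] .
    then have "eps_cosp V W (X1, f1, g1) v \<in> fvec (fst W)" by (simp add: proj_coord_def)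
    then have "proj_coord Y Z (b \<circ> g2) (a (f1 v)) (eps_cosp W Y (X2, f2, g2) (eps_cosp V W (X1, f1, g1) v))"
      using ppo_proj_coord_comp[OF P W cosp2(1) cosp1(3) cosp2(2,3) Eq_map_in[OF cosp1(2) v] pw]
        eps_cosp_proj_coord[OF Y r2] by blast
    then show ?thesis using eps_cosp_eqI[OF Y r3 v] by simp
  qed
  then show "eps_cosp V Y (Z, a \<circ> f1, b \<circ> g2) = eps_cosp W Y (X2, f2, g2) \<circ> eps_cosp V W (X1, f1, g1)"
    by (simp add: fun_eq_iff)
qed

text \<open>\<^const>\<open>comp_cls\<close> picks its pseudo push-out by \<open>SOME\<close>; this is a genuine pseudo
  push-out only because one exists (\<open>ppo_exists\<close>).\<close>
lemma eps_mor_comp_cls: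
  assumes W: "W \<in> Tq_obj" and Y: "Y \<in> Tq_obj"
    and c1: "c1 \<in> Tq_hom V W" and c2: "c2 \<in> Tq_hom W Y"
  obtains h1 h2 where "eps_mor (V, W, c1) = (fst V, fst W, h1)" "eps_mor (W, Y, c2) = (fst W, fst Y, h2)"
    "eps_mor (V, Y, comp_cls V W Y c1 c2) = (fst V, fst Y, h2 \<circ> h1)"
proof -
  obtain X1 f1 g1 where e1: "(SOME r. r \<in> c1) = (X1, f1, g1)" by (metis prod_cases3)
  obtain X2 f2 g2 where e2: "(SOME r. r \<in> c2) = (X2, f2, g2)" by (metis prod_cases3)
  have i1: "(X1, f1, g1) \<in> c1" and i2: "(X2, f2, g2) \<in> c2"
    using some_in_Tq_hom[OF c1] some_in_Tq_hom[OF c2] e1 e2 by simp_all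
  have r1: "(X1, f1, g1) \<in> cospans V W" and r2: "(X2, f2, g2) \<in> cospans W Y"
    using Tq_hom_cospans c1 c2 i1 i2 by blast+
  obtain Z a b where e3: "(SOME (Z, a, b). ppo W X1 g1 X2 f2 Z a b) = (Z, a, b)" by (metis prod_cases3)
  have "\<exists>Z a b. ppo W X1 g1 X2 f2 Z a b"
    using ppo_exists[OF W] cospansD[OF r1] cospansD[OF r2] by blast
  then have P: "ppo W X1 g1 X2 f2 Z a b"
    using someI_ex[of "\<lambda>(Z, a, b). ppo W X1 g1 X2 f2 Z a b"] e3 by auto
  have "comp_cls V W Y c1 c2 = cls V Y (Z, a \<circ> f1, b \<circ> g2)"
    unfolding comp_cls_def e1 e2 by (simp add: e3)
  moreover note r3 = eps_cosp_ppo(1)[OF W Y r1 r2 P]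
  ultimately have "eps_mor (V, Y, comp_cls V W Y c1 c2)
      = (fst V, fst Y, eps_cosp W Y (X2, f2, g2) \<circ> eps_cosp V W (X1, f1, g1))"
    using eps_mor_eq[OF Y cls_in_Tq_hom[OF r3] cls_self[OF r3]] eps_cosp_ppo(2)[OF W Y r1 r2 P] by simp
  then show ?thesis using that eps_mor_eq[OF W c1 i1] eps_mor_eq[OF Y c2 i2] by blast
qed

section \<open>The precomposition functor \<open>\<iota>\<close>\<close>

lemma F2sp_0: "F2sp A \<Longrightarrow> 0 \<in> A"
  by (simp add: F2sp_def)

lemma F2lin_in: "F2lin A B h \<Longrightarrow> x \<in> A \<Longrightarrow> h x \<in> B"
  by (simp add: F2lin_def)

lemma F2lin_add: "F2lin A B h \<Longrightarrow> x \<in> A \<Longrightarrow> y \<in> A \<Longrightarrow> h (x + y) = h x + h y"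
  by (simp add: F2lin_def)

lemma F2lin_0: "F2sp A \<Longrightarrow> F2lin A B h \<Longrightarrow> h 0 = 0"
  using F2lin_add[of A B h 0 0] F2sp_0[of A] by simp

lemma Ffunctor_F2sp: "is_Ffunctor Fo Fm \<Longrightarrow> F2sp (Fo n)"
  by (simp add: is_Ffunctor_def)

lemma Ffunctor_F2lin: "is_Ffunctor Fo Fm \<Longrightarrow> Ef_map n m f \<Longrightarrow> F2lin (Fo n) (Fo m) (Fm (n, m, f))"
  by (simp add: is_Ffunctor_def)

lemma Ffunctor_id: "is_Ffunctor Fo Fm \<Longrightarrow> x \<in> Fo n \<Longrightarrow> Fm (n, n, fid n) x = x"
  by (simp add: is_Ffunctor_def)

lemma Ffunctor_comp:
  "is_Ffunctor Fo Fm \<Longrightarrow> Ef_map n m f \<Longrightarrow> Ef_map m k g \<Longrightarrow> x \<in> Fo n \<Longrightarrow>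
    Fm (n, k, g \<circ> f) x = Fm (m, k, g) (Fm (n, m, f) x)"
  unfolding is_Ffunctor_def by blast

lemma Ffunctor_retract:
  assumes F: "is_Ffunctor Fo Fm" and x: "x \<in> Fo n" and nN: "n \<le> N"
  shows "Fm (N, n, prj N n) (Fm (n, N, fid n) x) = x"
  using Ffunctor_comp[OF F Ef_map_fid[OF nN] Ef_map_prj[of N n] x] prj_comp_fid[OF nN] Ffunctor_id[OF F x]
  by simp

lemma Ef_map_enlarge:
  assumes f: "Ef_map n m f" and nN: "n \<le> N" and mM: "m \<le> M"
  shows "Ef_map N M (fid m \<circ> f \<circ> prj N n)"
    and "(fid m \<circ> f \<circ> prj N n) \<circ> fid n = fid m \<circ> f"
    and "prj M m \<circ> (fid m \<circ> f \<circ> prj N n) = f \<circ> prj N n"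
proof -
  show "Ef_map N M (fid m \<circ> f \<circ> prj N n)"
    using Ef_map_comp[OF Ef_map_prj Ef_map_comp[OF f Ef_map_fid[OF mM]]] by (simp add: comp_assoc)
  show "(fid m \<circ> f \<circ> prj N n) \<circ> fid n = fid m \<circ> f"
    using prj_comp_fid[OF nN] comp_fid[OF f] by (simp add: comp_assoc)
  have "prj M m \<circ> (fid m \<circ> f \<circ> prj N n) = (prj M m \<circ> fid m) \<circ> f \<circ> prj N n"
    by (simp add: comp_assoc)
  also have "\<dots> = f \<circ> prj N n" using prj_comp_fid[OF mM] fid_comp[OF f] by simp
  finally show "prj M m \<circ> (fid m \<circ> f \<circ> prj N n) = f \<circ> prj N n" .
qed

lemma Ffunctor_enlarge:
  assumes F: "is_Ffunctor Fo Fm" and f: "Ef_map n m f" and nN: "n \<le> N" and mM: "m \<le> M"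
    and x: "x \<in> Fo n"
  shows "Fm (m, M, fid m) (Fm (n, m, f) x) = Fm (N, M, fid m \<circ> f \<circ> prj N n) (Fm (n, N, fid n) x)"
  using Ffunctor_comp[OF F f Ef_map_fid[OF mM] x]
    Ffunctor_comp[OF F Ef_map_fid[OF nN] Ef_map_enlarge(1)[OF f nN mM] x] Ef_map_enlarge(2)[OF f nN mM]
  by simp

lemma iota_ob_apply: "iota_ob Fo V = Fo (fst V)"
  by (simp add: iota_ob_def)

lemma iota_nat_apply: "iota_nat \<eta> V = \<eta> (fst V)"
  by (simp add: iota_nat_def)

lemma iota_Tq_nat:
  assumes \<eta>: "Ef_nat Fo Fm Go Gm \<eta>"
  shows "Tq_nat (iota_ob Fo) (iota_mor Fm) (iota_ob Go) (iota_mor Gm) (iota_nat \<eta>)"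
  unfolding Tq_nat_def
proof (intro conjI ballI)
  fix V assume "V \<in> Tq_obj"
  show "F2lin (iota_ob Fo V) (iota_ob Go V) (iota_nat \<eta> V)"
    using \<eta> by (simp add: Ef_nat_def iota_ob_apply iota_nat_apply)
next
  fix V W c x assume "V \<in> Tq_obj" "W \<in> Tq_obj" "c \<in> Tq_hom V W" "x \<in> iota_ob Fo V"
  moreover obtain h where "eps_mor (V, W, c) = (fst V, fst W, h)" "Ef_map (fst V) (fst W) h"
    using eps_mor_Ef_map calculation by blast
  ultimately show "iota_nat \<eta> W (iota_mor Fm (V, W, c) x) = iota_mor Gm (V, W, c) (iota_nat \<eta> V x)"
    using \<eta> by (simp add: Ef_nat_def iota_mor_def iota_nat_apply iota_ob_apply)
qed

lemma iota_is_Fquad: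
  assumes F: "is_Ffunctor Fo Fm"
  shows "is_Fquad (iota_ob Fo) (iota_mor Fm)"
  unfolding is_Fquad_def
proof (intro conjI ballI)
  fix V assume "V \<in> Tq_obj"
  then show "F2sp (iota_ob Fo V)" using Ffunctor_F2sp[OF F] by (simp add: iota_ob_apply)
next
  fix V W c assume "V \<in> Tq_obj" "W \<in> Tq_obj" "c \<in> Tq_hom V W"
  then obtain h where "eps_mor (V, W, c) = (fst V, fst W, h)" "Ef_map (fst V) (fst W) h"
    using eps_mor_Ef_map by blast
  then show "F2lin (iota_ob Fo V) (iota_ob Fo W) (iota_mor Fm (V, W, c))"
    using Ffunctor_F2lin[OF F] by (simp add: iota_mor_def iota_ob_apply)
next
  fix V x assume "V \<in> Tq_obj" "x \<in> iota_ob Fo V"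
  then show "iota_mor Fm (Tq_id V) x = x"
    using eps_mor_Tq_id Ffunctor_id[OF F] by (simp add: iota_mor_def iota_ob_apply)
next
  fix V W Y c1 c2 x assume "V \<in> Tq_obj" and W: "W \<in> Tq_obj" and Y: "Y \<in> Tq_obj"
    and c: "c1 \<in> Tq_hom V W" "c2 \<in> Tq_hom W Y" and x: "x \<in> iota_ob Fo V"
  obtain h1 h2 where e: "eps_mor (V, W, c1) = (fst V, fst W, h1)" "eps_mor (W, Y, c2) = (fst W, fst Y, h2)"
    "eps_mor (V, Y, comp_cls V W Y c1 c2) = (fst V, fst Y, h2 \<circ> h1)"
    using eps_mor_comp_cls[OF W Y c] by blast
  have "Ef_map (fst V) (fst W) h1" "Ef_map (fst W) (fst Y) h2"
    using eps_mor_Ef_map[OF W c(1)] eps_mor_Ef_map[OF Y c(2)] e(1,2) by auto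
  then show "iota_mor Fm (V, Y, comp_cls V W Y c1 c2) x = iota_mor Fm (W, Y, c2) (iota_mor Fm (V, W, c1) x)"
    using Ffunctor_comp[OF F] x e by (simp add: iota_mor_def iota_ob_apply)
qed

lemma Tq_nat_iota_Ef_map:
  assumes \<theta>: "Tq_nat (iota_ob Fo) (iota_mor Fm) (iota_ob Go) (iota_mor Gm) \<theta>"
    and V: "V \<in> Tq_obj" and W: "W \<in> Tq_obj" and h: "Ef_map (fst V) (fst W) h" and x: "x \<in> Fo (fst V)"
  shows "\<theta> W (Fm (fst V, fst W, h) x) = Gm (fst V, fst W, h) (\<theta> V x)"
proof -
  obtain c where c: "c \<in> Tq_hom V W" and e: "eps_mor (V, W, c) = (fst V, fst W, h)"
    using eps_full[OF V W h] by blast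
  have "\<theta> W (iota_mor Fm (V, W, c) x) = iota_mor Gm (V, W, c) (\<theta> V x)"
    using \<theta> V W c x by (simp add: Tq_nat_def iota_ob_apply)
  then show ?thesis by (simp add: iota_mor_def e)
qed

lemma Tq_subfunctor_iota_Ef_map:
  assumes H: "Tq_subfunctor (iota_ob Fo) (iota_mor Fm) H"
    and V: "V \<in> Tq_obj" and W: "W \<in> Tq_obj" and h: "Ef_map (fst V) (fst W) h" and x: "x \<in> H V"
  shows "Fm (fst V, fst W, h) x \<in> H W"
proof -
  obtain c where "c \<in> Tq_hom V W" "eps_mor (V, W, c) = (fst V, fst W, h)"
    using eps_full[OF V W h] by blast
  then show ?thesis using H V W x by (force simp: Tq_subfunctor_def iota_mor_def)
qed

lemma iota_faithful:
  assumes F: "is_Ffunctor Fo Fm" and \<eta>: "Ef_nat Fo Fm Go Gm \<eta>" "Ef_nat Fo Fm Go Gm \<eta>'"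
    and eq: "\<forall>V\<in>Tq_obj. \<forall>x\<in>iota_ob Fo V. iota_nat \<eta> V x = iota_nat \<eta>' V x"
    and x: "x \<in> Fo n"
  shows "\<eta> n x = \<eta>' n x"
proof -
  define y where "y = Fm (n, hdim n, fid n) x"
  have y: "y \<in> Fo (hdim n)" using F2lin_in[OF Ffunctor_F2lin[OF F Ef_map_fid[OF le_hdim]] x] by (simp add: y_def)
  have "\<eta> (hdim n) y = \<eta>' (hdim n) y" using eq hyp_obj[of n] y by (simp add: iota_nat_apply iota_ob_apply)
  then have "\<eta> n (Fm (hdim n, n, prj (hdim n) n) y) = \<eta>' n (Fm (hdim n, n, prj (hdim n) n) y)"
    using \<eta> y Ef_map_prj by (simp add: Ef_nat_def)
  then show ?thesis using Ffunctor_retract[OF F x le_hdim] by (simp add: y_def)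
qed

definition descend_nat ::
  "(qobj \<Rightarrow> 'v \<Rightarrow> 'w) \<Rightarrow> (ef_mor \<Rightarrow> 'v \<Rightarrow> 'v) \<Rightarrow> (ef_mor \<Rightarrow> 'w \<Rightarrow> 'w) \<Rightarrow> nat \<Rightarrow> 'v \<Rightarrow> 'w" where
  "descend_nat \<theta> Fm Gm n x = Gm (hdim n, n, prj (hdim n) n) (\<theta> (hyp n) (Fm (n, hdim n, fid n) x))"

lemma Ef_nat_descend_nat:
  assumes F: "is_Ffunctor Fo Fm" and G: "is_Ffunctor Go Gm"
    and \<theta>: "Tq_nat (iota_ob Fo) (iota_mor Fm) (iota_ob Go) (iota_mor Gm) \<theta>"
  shows "Ef_nat Fo Fm Go Gm (descend_nat \<theta> Fm Gm)"
proof -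
  have \<theta>_lin: "F2lin (Fo (hdim n)) (Go (hdim n)) (\<theta> (hyp n))" for n
    using \<theta> hyp_obj by (simp add: Tq_nat_def iota_ob_apply)
  have emb: "F2lin (Fo n) (Fo (hdim n)) (Fm (n, hdim n, fid n))" for n
    using Ffunctor_F2lin[OF F Ef_map_fid[OF le_hdim]] .
  have "F2lin (Fo n) (Go n) (descend_nat \<theta> Fm Gm n)" for n
    using F2lin_in[OF emb] F2lin_in[OF \<theta>_lin] F2lin_in[OF Ffunctor_F2lin[OF G Ef_map_prj]]
      F2lin_add[OF emb] F2lin_add[OF \<theta>_lin] F2lin_add[OF Ffunctor_F2lin[OF G Ef_map_prj]]
    unfolding F2lin_def descend_nat_def by simp
  moreover have "descend_nat \<theta> Fm Gm m (Fm (n, m, f) x) = Gm (n, m, f) (descend_nat \<theta> Fm Gm n x)"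
    if f: "Ef_map n m f" and x: "x \<in> Fo n" for n m f x
  proof -
    note nN = le_hdim[of n] and mM = le_hdim[of m]
    define f' where "f' = fid m \<circ> f \<circ> prj (hdim n) n"
    have f': "Ef_map (hdim n) (hdim m) f'" using Ef_map_enlarge(1)[OF f nN mM] by (simp add: f'_def)
    define y where "y = Fm (n, hdim n, fid n) x"
    have y: "y \<in> Fo (hdim n)" using F2lin_in[OF emb x] by (simp add: y_def)
    have \<theta>y: "\<theta> (hyp n) y \<in> Go (hdim n)" using F2lin_in[OF \<theta>_lin y] .
    have "descend_nat \<theta> Fm Gm m (Fm (n, m, f) x)
        = Gm (hdim m, m, prj (hdim m) m) (Gm (hdim n, hdim m, f') (\<theta> (hyp n) y))"
      using Ffunctor_enlarge[OF F f nN mM x] Tq_nat_iota_Ef_map[OF \<theta> hyp_obj hyp_obj f' y]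
      by (simp add: descend_nat_def f'_def y_def)
    also have "\<dots> = Gm (hdim n, m, prj (hdim m) m \<circ> f') (\<theta> (hyp n) y)"
      using Ffunctor_comp[OF G f' Ef_map_prj \<theta>y] by simp
    also have "\<dots> = Gm (n, m, f) (descend_nat \<theta> Fm Gm n x)"
      using Ffunctor_comp[OF G Ef_map_prj f \<theta>y] Ef_map_enlarge(3)[OF f nN mM]
      by (simp add: descend_nat_def f'_def y_def)
    finally show ?thesis .
  qed
  ultimately show ?thesis by (simp add: Ef_nat_def)
qed

lemma Tq_nat_iota_eq_descend_nat:
  assumes F: "is_Ffunctor Fo Fm"
    and \<theta>: "Tq_nat (iota_ob Fo) (iota_mor Fm) (iota_ob Go) (iota_mor Gm) \<theta>"
    and V: "V \<in> Tq_obj" and x: "x \<in> Fo (fst V)"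
  shows "\<theta> V x = descend_nat \<theta> Fm Gm (fst V) x"
proof -
  note nN = le_hdim[of "fst V"]
  define y where "y = Fm (fst V, hdim (fst V), fid (fst V)) x"
  have "y \<in> Fo (hdim (fst V))" using F2lin_in[OF Ffunctor_F2lin[OF F Ef_map_fid[OF nN]] x] by (simp add: y_def)
  then have "\<theta> V (Fm (hdim (fst V), fst V, prj (hdim (fst V)) (fst V)) y)
      = Gm (hdim (fst V), fst V, prj (hdim (fst V)) (fst V)) (\<theta> (hyp (fst V)) y)"
    using Tq_nat_iota_Ef_map[OF \<theta> hyp_obj V Ef_map_prj] by simp
  then show ?thesis using Ffunctor_retract[OF F x nN] by (simp add: descend_nat_def y_def)
qed

lemma iota_full:
  assumes F: "is_Ffunctor Fo Fm" and G: "is_Ffunctor Go Gm"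
    and \<theta>: "Tq_nat (iota_ob Fo) (iota_mor Fm) (iota_ob Go) (iota_mor Gm) \<theta>"
  shows "\<exists>\<eta>. Ef_nat Fo Fm Go Gm \<eta> \<and> (\<forall>V\<in>Tq_obj. \<forall>x\<in>iota_ob Fo V. \<theta> V x = iota_nat \<eta> V x)"
  using Ef_nat_descend_nat[OF F G \<theta>] Tq_nat_iota_eq_descend_nat[OF F \<theta>]
  by (auto simp: iota_ob_apply iota_nat_apply)

definition descend_sub :: "(nat \<Rightarrow> 'v set) \<Rightarrow> (ef_mor \<Rightarrow> 'v \<Rightarrow> 'v) \<Rightarrow> (qobj \<Rightarrow> 'v set) \<Rightarrow> nat \<Rightarrow> 'v set" where
  "descend_sub Fo Fm H n = {x \<in> Fo n. Fm (n, hdim n, fid n) x \<in> H (hyp n)}"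

lemma Ef_subfunctor_descend_sub:
  assumes F: "is_Ffunctor Fo Fm" and H: "Tq_subfunctor (iota_ob Fo) (iota_mor Fm) H"
  shows "Ef_subfunctor Fo Fm (descend_sub Fo Fm H)"
proof -
  have emb: "F2lin (Fo n) (Fo (hdim n)) (Fm (n, hdim n, fid n))" for n
    using Ffunctor_F2lin[OF F Ef_map_fid[OF le_hdim]] .
  have "F2sp (H (hyp n))" for n using H hyp_obj by (simp add: Tq_subfunctor_def)
  then have "F2sp (descend_sub Fo Fm H n)" for n
    using Ffunctor_F2sp[OF F, of n] F2lin_0[OF Ffunctor_F2sp[OF F] emb] F2lin_add[OF emb]
    unfolding F2sp_def descend_sub_def by auto
  moreover have "Fm (n, m, f) ` descend_sub Fo Fm H n \<subseteq> descend_sub Fo Fm H m" if f: "Ef_map n m f" for n m f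
  proof
    fix z assume "z \<in> Fm (n, m, f) ` descend_sub Fo Fm H n"
    then obtain x where x: "x \<in> Fo n" "Fm (n, hdim n, fid n) x \<in> H (hyp n)" and z: "z = Fm (n, m, f) x"
      by (auto simp: descend_sub_def)
    have "Fm (m, hdim m, fid m) z \<in> H (hyp m)"
      using Tq_subfunctor_iota_Ef_map[OF H hyp_obj hyp_obj Ef_map_enlarge(1)[OF f le_hdim le_hdim] x(2)]
        Ffunctor_enlarge[OF F f le_hdim le_hdim x(1)] z by simp
    then show "z \<in> descend_sub Fo Fm H m"
      using F2lin_in[OF Ffunctor_F2lin[OF F f] x(1)] z by (simp add: descend_sub_def)
  qed
  ultimately show ?thesis by (auto simp: Ef_subfunctor_def descend_sub_def)
qed

lemma Tq_subfunctor_eq_descend_sub: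
  assumes F: "is_Ffunctor Fo Fm" and H: "Tq_subfunctor (iota_ob Fo) (iota_mor Fm) H" and V: "V \<in> Tq_obj"
  shows "H V = descend_sub Fo Fm H (fst V)"
proof
  show "H V \<subseteq> descend_sub Fo Fm H (fst V)"
    using Tq_subfunctor_iota_Ef_map[OF H V hyp_obj Ef_map_fid[OF le_hdim]] H V
    by (auto simp: descend_sub_def Tq_subfunctor_def iota_ob_apply)
  show "descend_sub Fo Fm H (fst V) \<subseteq> H V"
  proof
    fix x assume "x \<in> descend_sub Fo Fm H (fst V)"
    then have x: "x \<in> Fo (fst V)" "Fm (fst V, hdim (fst V), fid (fst V)) x \<in> H (hyp (fst V))"
      by (auto simp: descend_sub_def)
    then show "x \<in> H V"
      using Tq_subfunctor_iota_Ef_map[OF H hyp_obj V Ef_map_prj x(2)] Ffunctor_retract[OF F x(1) le_hdim]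
      by simp
  qed
qed

lemma iota_simple:
  assumes S: "Ef_simple So Sm"
  shows "Tq_simple (iota_ob So) (iota_mor Sm)"
proof -
  have F: "is_Ffunctor So Sm" using S by (simp add: Ef_simple_def)
  obtain n x where x: "x \<in> So n" "x \<noteq> 0"
    using S F2sp_0[OF Ffunctor_F2sp[OF F]] by (auto simp: Ef_simple_def)
  have nN: "n \<le> hdim n" by (rule le_hdim)
  have "Sm (n, hdim n, fid n) x \<noteq> 0"
    using Ffunctor_retract[OF F x(1) nN] F2lin_0[OF Ffunctor_F2sp[OF F] Ffunctor_F2lin[OF F Ef_map_prj]] x(2)
    by auto
  then have "iota_ob So (hyp n) \<noteq> {0}"
    using F2lin_in[OF Ffunctor_F2lin[OF F Ef_map_fid[OF nN]] x(1)] by (auto simp: iota_ob_apply)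
  moreover have "(\<forall>V\<in>Tq_obj. H V = {0}) \<or> (\<forall>V\<in>Tq_obj. H V = iota_ob So V)"
    if H: "Tq_subfunctor (iota_ob So) (iota_mor Sm) H" for H
  proof -
    have "(\<forall>n. descend_sub So Sm H n = {0}) \<or> (\<forall>n. descend_sub So Sm H n = So n)"
      using S Ef_subfunctor_descend_sub[OF F H] by (simp add: Ef_simple_def)
    then show ?thesis using Tq_subfunctor_eq_descend_sub[OF F H] by (auto simp: iota_ob_apply)
  qed
  ultimately show ?thesis using iota_is_Fquad[OF F] hyp_obj by (auto simp: Tq_simple_def)
qed

theorem theorem3p1:
  shows
  \<comment> \<open>(1) iota is exact: it sends short exact sequences in F to short exact sequences in F_quad\<close>
  "(\<forall>(F1o :: nat \<Rightarrow> 'a::ab_group_add set) F1m (F2o :: nat \<Rightarrow> 'b::ab_group_add set) F2m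
      (F3o :: nat \<Rightarrow> 'c::ab_group_add set) F3m \<alpha> \<beta>.
      is_Ffunctor F1o F1m \<and> is_Ffunctor F2o F2m \<and> is_Ffunctor F3o F3m
      \<and> Ef_nat F1o F1m F2o F2m \<alpha> \<and> Ef_nat F2o F2m F3o F3m \<beta>
      \<and> (\<forall>n. short_exact (F1o n) (F2o n) (F3o n) (\<alpha> n) (\<beta> n))
      \<longrightarrow> Tq_nat (iota_ob F1o) (iota_mor F1m) (iota_ob F2o) (iota_mor F2m) (iota_nat \<alpha>)
        \<and> Tq_nat (iota_ob F2o) (iota_mor F2m) (iota_ob F3o) (iota_mor F3m) (iota_nat \<beta>)
        \<and> (\<forall>V\<in>Tq_obj. short_exact (iota_ob F1o V) (iota_ob F2o V) (iota_ob F3o V)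
                                    (iota_nat \<alpha> V) (iota_nat \<beta> V)))
   \<and>
  \<comment> \<open>(2) iota preserves (pointwise) tensor products\<close>
   (\<forall>(Fo :: nat \<Rightarrow> 'a::ab_group_add set) Fm (Go :: nat \<Rightarrow> 'b::ab_group_add set) Gm.
      is_Ffunctor Fo Fm \<and> is_Ffunctor Go Gm \<longrightarrow>
      (\<forall>V\<in>Tq_obj. iota_ob (ftens_ob Fo Go) V = ftens_ob (iota_ob Fo) (iota_ob Go) V)
      \<and> (\<forall>V\<in>Tq_obj. \<forall>W\<in>Tq_obj. \<forall>c\<in>Tq_hom V W.
           iota_mor (ftens_mor Fo Go Fm Gm) (V, W, c)
           = ftens_mor (iota_ob Fo) (iota_ob Go) (iota_mor Fm) (iota_mor Gm) (V, W, c)))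
   \<and>
  \<comment> \<open>(3) iota is fully faithful\<close>
   (\<forall>(Fo :: nat \<Rightarrow> 'a::ab_group_add set) Fm (Go :: nat \<Rightarrow> 'b::ab_group_add set) Gm.
      is_Ffunctor Fo Fm \<and> is_Ffunctor Go Gm \<longrightarrow>
      (\<forall>\<eta>. Ef_nat Fo Fm Go Gm \<eta> \<longrightarrow>
           Tq_nat (iota_ob Fo) (iota_mor Fm) (iota_ob Go) (iota_mor Gm) (iota_nat \<eta>))
      \<and> (\<forall>\<eta> \<eta>'. Ef_nat Fo Fm Go Gm \<eta> \<and> Ef_nat Fo Fm Go Gm \<eta>'
           \<and> (\<forall>V\<in>Tq_obj. \<forall>x\<in>iota_ob Fo V. iota_nat \<eta> V x = iota_nat \<eta>' V x)
           \<longrightarrow> (\<forall>n. \<forall>x\<in>Fo n. \<eta> n x = \<eta>' n x))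
      \<and> (\<forall>\<theta>. Tq_nat (iota_ob Fo) (iota_mor Fm) (iota_ob Go) (iota_mor Gm) \<theta> \<longrightarrow>
           (\<exists>\<eta>. Ef_nat Fo Fm Go Gm \<eta>
                \<and> (\<forall>V\<in>Tq_obj. \<forall>x\<in>iota_ob Fo V. \<theta> V x = iota_nat \<eta> V x))))
   \<and>
  \<comment> \<open>(4) iota sends simple objects to simple objects\<close>
   (\<forall>(So :: nat \<Rightarrow> 'a::ab_group_add set) Sm.
      Ef_simple So Sm \<longrightarrow> Tq_simple (iota_ob So) (iota_mor Sm))"
  apply (intro conjI)
  subgoal by (simp add: iota_Tq_nat iota_ob_apply iota_nat_apply)
  subgoal by (simp add: iota_ob_def ftens_ob_def iota_mor_def ftens_mor_def eps_mor_def)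
  subgoal using iota_Tq_nat iota_faithful iota_full by blast
  subgoal using iota_simple by blast
  done

end
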